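(* Assume the setting and notation in the context. Suppose the scores $\{T_i\}_{i\in\mathcal C\cup\mathcal U}$ are continuous random variables and the residuals $\{R_i\}_{i\in\mathcal C\cup\mathcal U}$ are continuous random variables. Suppose the ranking threshold is test-driven: $\hat\kappa=\kappa(T_i:i\in\mathcal U)$ for a deterministic measurable $\kappa:\mathbb R^m\to\{1,\dots,m\}$. Suppose further there is a deterministic $t_u\in\mathbb R$ such that almost surely $\hat\kappa^{j\leftarrow t_u}=\hat\kappa$ for every $j\in\mathcal U$, where $\hat\kappa^{j\leftarrow t}$ denotes the value of $\kappa$ computed after replacing $T_j$ by $t$; and that $\hat\kappa\le m-1$ almost surely. Let $\hat{\mathcal S}_u=\{j\in\mathcal U:T_j\le T_{(\hat\kappa)}\}$, $\hat{\mathcal S}_c^+=\{i\in\mathcal C: T_i\le T_{(\hat\kappa+1)}\}$, and for $j\in\hat{\mathcal S}_u$ let $\mathrm{PI}_j=[\hat\mu(X_j)-Q_\alpha(\{R_i\}_{i\in\hat{\mathcal S}_c^+}),\ \hat\mu(X_j)+Q_\alpha(\{R_i\}_{i\in\hat{\mathcal S}_c^+})]$. Then $$\alpha-\mathbb E\Big[\frac{1}{(n+1)F_T(T_{(\hat\kappa+1)})}\Big]\le \mathrm{FCR}\le\alpha,$$ where $F_T$ is the common cumulative distribution function of the $T_i$.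
   Context: Setting: $\hat\mu:\mathbb R^d\to\mathbb R$ and $g:\mathbb R^d\to\mathbb R$ are fixed deterministic measurable functions. Calibration indices $\mathcal C$, $|\mathcal C|=n$; test indices $\mathcal U$ (disjoint), $|\mathcal U|=m\ge2$. The pairs $(X_i,Y_i)\in\mathbb R^d\times\mathbb R$, $i\in\mathcal C\cup\mathcal U$, are i.i.d. Scores $T_i=g(X_i)$, residuals $R_i=|Y_i-\hat\mu(X_i)|$, $\alpha\in(0,1)$. $T_{(r)}$ denotes the $r$-th smallest value of the test scores $\{T_i\}_{i\in\mathcal U}$. For a finite index set $S$, $Q_\alpha(\{R_i\}_{i\in S})$ is the $\lceil(1-\alpha)(|S|+1)\rceil$-th smallest value of $\{R_i\}_{i\in S}$, equal to $+\infty$ if that index exceeds $|S|$. $\mathrm{FCR}=\mathbb E\Big[\frac{|\{j\in\hat{\mathcal S}_u: Y_j\notin\mathrm{PI}_j\}|}{\max\{|\hat{\mathcal S}_u|,1\}}\Big]$. *)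

theory Defs
  imports "HOL-Probability.Probability" "HOL-Library.Multiset"
begin

definition kth_smallest :: "(nat \<Rightarrow> real) \<Rightarrow> nat set \<Rightarrow> nat \<Rightarrow> real" where
  "kth_smallest v S r = sorted_list_of_multiset (image_mset v (mset_set S)) ! (r - 1)"

definition conf_quantile :: "real \<Rightarrow> (nat \<Rightarrow> real) \<Rightarrow> nat set \<Rightarrow> ereal" where
  "conf_quantile \<alpha> v S =
     (let k = nat \<lceil>(1 - \<alpha>) * (real (card S) + 1)\<rceil>
      in if k > card S then \<infinity> else ereal (kth_smallest v S k))"

definition sel_test :: "(nat \<Rightarrow> real) \<Rightarrow> nat set \<Rightarrow> nat \<Rightarrow> nat set" where
  "sel_test T U k = {j \<in> U. T j \<le> kth_smallest T U k}"

definition sel_calib_plus :: "(nat \<Rightarrow> real) \<Rightarrow> nat set \<Rightarrow> nat set \<Rightarrow> nat \<Rightarrow> nat set" where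
  "sel_calib_plus T C U k = {i \<in> C. T i \<le> kth_smallest T U (k + 1)}"

definition pred_int :: "real \<Rightarrow> ereal \<Rightarrow> real set" where
  "pred_int mu Q = {y. ereal mu - Q \<le> ereal y \<and> ereal y \<le> ereal mu + Q}"

end

theory Submission
  imports Defs
begin

text \<open>For a test point \<open>j\<close> let \<open>\<tau>\<^sub>j\<close> be the \<open>\<kappa>\<close>-th smallest of the other test scores, with
  \<open>\<kappa>\<close> computed after replacing \<open>T\<^sub>j\<close> by \<open>t\<^sub>u\<close>; it does not depend on \<open>(T\<^sub>j, R\<^sub>j)\<close>. When
  this replacement leaves \<open>\<kappa>\<close> unchanged and \<open>\<kappa> \<le> m - 1\<close>, the point \<open>j\<close> is selected iff
  \<open>T\<^sub>j \<le> \<tau>\<^sub>j\<close>, and then \<open>\<tau>\<^sub>j\<close> is the \<open>(\<kappa> + 1)\<close>-th smallest test score, the calibration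
  threshold. With distinct scores exactly \<open>\<kappa>\<close> points are selected, so the FCR is
  \<open>\<Sum>\<^sub>j E[1{j selected and missed} / \<kappa>]\<close> while \<open>\<Sum>\<^sub>j 1{T\<^sub>j \<le> \<tau>\<^sub>j} / \<kappa> = 1\<close>.

  Conditionally on the other test points, \<open>\<tau>\<^sub>j\<close> is fixed and \<open>j\<close> is exchangeable with the
  calibration points. Among the points of \<open>{j} \<union> C\<close> with score at most \<open>\<tau>\<^sub>j\<close>, at most an
  \<open>\<alpha>\<close>-fraction, and with distinct residuals at least that fraction minus one point, exceed the
  conformal quantile of the others. Averaging over the exchangeable points pins the conditional
  probability that \<open>j\<close> is selected and missed between \<open>\<alpha> F(\<tau>\<^sub>j) - 1/(n+1)\<close> and
  \<open>\<alpha> F(\<tau>\<^sub>j)\<close>; dividing by \<open>\<kappa>\<close> and summing over \<open>j\<close> gives both bounds.\<close>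

section \<open>Order statistics\<close>

lemma sorted_nth_iff_less_length_filter:
  fixes xs :: "'a::linorder list"
  assumes "sorted xs" "r < length xs"
    and down: "\<And>x y. x \<le> y \<Longrightarrow> P y \<Longrightarrow> P x"
  shows "P (xs ! r) \<longleftrightarrow> r < length (filter P xs)"
  using assms(1,2)
proof (induction xs arbitrary: r)
  case Nil
  then show ?case by simp
next
  case (Cons x xs)
  have "\<not> P x \<Longrightarrow> filter P xs = []"
    using Cons.prems(1) down by (auto simp: filter_empty_conv)
  moreover have "\<not> P x \<Longrightarrow> \<not> P (xs ! r')" if "r' < length xs" for r'
  proof -
    have "x \<le> xs ! r'"
      using Cons.prems(1) that by simp
    then show "\<not> P x \<Longrightarrow> \<not> P (xs ! r')"
      using down by blast
  qed
  ultimately show ?case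
    using Cons by (cases r) auto
qed

lemma kth_smallest_iff_card:
  assumes "finite S" "1 \<le> r" "r \<le> card S"
    and down: "\<And>x y. x \<le> y \<Longrightarrow> P y \<Longrightarrow> P x"
  shows "P (kth_smallest v S r) \<longleftrightarrow> r \<le> card {l\<in>S. P (v l)}"
proof -
  let ?xs = "sorted_list_of_multiset (image_mset v (mset_set S))"
  have "length ?xs = card S"
    by (metis mset_sorted_list_of_multiset size_image_mset size_mset size_mset_set)
  moreover have "length (filter P ?xs) = card {l\<in>S. P (v l)}"
  proof -
    have "length (filter P ?xs) = size (filter_mset P (image_mset v (mset_set S)))"
      by (metis mset_filter mset_sorted_list_of_multiset size_mset)
    also have "\<dots> = size (image_mset v (filter_mset (\<lambda>l. P (v l)) (mset_set S)))"
      by (simp add: filter_mset_image_mset)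
    finally show ?thesis
      using assms(1) by simp
  qed
  ultimately have "P (?xs ! (r - 1)) \<longleftrightarrow> r - 1 < card {l\<in>S. P (v l)}"
    using sorted_nth_iff_less_length_filter[of ?xs "r - 1" P] assms by simp
  moreover have "r - 1 < card {l\<in>S. P (v l)} \<longleftrightarrow> r \<le> card {l\<in>S. P (v l)}"
    using assms(2) by arith
  ultimately show ?thesis
    by (simp add: kth_smallest_def)
qed

lemma kth_smallest_le_iff:
  assumes "finite S" "1 \<le> r" "r \<le> card S"
  shows "kth_smallest v S r \<le> t \<longleftrightarrow> r \<le> card {l\<in>S. v l \<le> t}"
  using kth_smallest_iff_card[OF assms, of "\<lambda>x. x \<le> t"] by simp

lemma kth_smallest_less_iff:
  assumes "finite S" "1 \<le> r" "r \<le> card S"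
  shows "kth_smallest v S r < t \<longleftrightarrow> r \<le> card {l\<in>S. v l < t}"
  using kth_smallest_iff_card[OF assms, of "\<lambda>x. x < t"] by simp

lemma kth_smallest_cong:
  "(\<And>s. s \<in> S \<Longrightarrow> v s = w s) \<Longrightarrow> kth_smallest v S r = kth_smallest w S r"
  unfolding kth_smallest_def
  by (metis (no_types, lifting) elem_mset_set finite_set_mset_mset_set image_mset_cong
      mset_set.infinite set_mset_empty empty_iff)

lemma kth_smallest_reindex:
  "inj_on s S \<Longrightarrow> kth_smallest (v \<circ> s) S r = kth_smallest v (s ` S) r"
  unfolding kth_smallest_def
  by (simp add: image_mset.compositionality image_mset_mset_set[symmetric])

text \<open>Beyond the range of indices the value is the unspecified list element, independent of \<open>v\<close>.\<close>
lemma kth_smallest_out_of_range: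
  assumes "finite S" "card S < r"
  shows "kth_smallest v S r = [] ! (r - 1 - card S)"
proof -
  have nth_beyond: "xs ! (length xs + d) = [] ! d" for xs :: "real list" and d
    by (induction xs) auto
  have "length (sorted_list_of_multiset (image_mset v (mset_set S))) = card S"
    by (metis mset_sorted_list_of_multiset size_image_mset size_mset size_mset_set)
  then show ?thesis
    using nth_beyond[of "sorted_list_of_multiset (image_mset v (mset_set S))" "r - 1 - card S"] assms(2)
    by (simp add: kth_smallest_def)
qed

lemma card_le_kth_smallest:
  assumes "finite S" "1 \<le> r" "r \<le> card S"
  shows "r \<le> card {l\<in>S. v l \<le> kth_smallest v S r}"
  using kth_smallest_le_iff[OF assms, of v "kth_smallest v S r"] by simp

lemma card_le_kth_smallest_inj:
  assumes "finite S" "1 \<le> r" "r \<le> card S" "inj_on v S"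
  shows "card {l\<in>S. v l \<le> kth_smallest v S r} = r"
proof -
  let ?x = "kth_smallest v S r"
  have split: "{l\<in>S. v l \<le> ?x} = {l\<in>S. v l < ?x} \<union> {l\<in>S. v l = ?x}"
    by auto
  have "card {l\<in>S. v l < ?x} < r"
    using kth_smallest_less_iff[OF assms(1-3), of v ?x] by simp
  moreover have "card {l\<in>S. v l = ?x} \<le> 1"
    using assms(1,4) card_le_Suc0_iff_eq[of "{l\<in>S. v l = ?x}"] by (auto simp: inj_on_def)
  moreover have "card {l\<in>S. v l \<le> ?x} \<le> card {l\<in>S. v l < ?x} + card {l\<in>S. v l = ?x}"
    unfolding split by (rule card_Un_le)
  ultimately have "card {l\<in>S. v l \<le> ?x} \<le> r"
    by linarith
  then show ?thesis
    using card_le_kth_smallest[OF assms(1-3), of v] by simp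
qed

lemma le_kth_smallest_remove_iff:
  assumes "finite U" "j \<in> U" "1 \<le> k" "k \<le> card (U - {j})"
  shows "v j \<le> kth_smallest v U k \<longleftrightarrow> v j \<le> kth_smallest v (U - {j}) k"
proof -
  have "k \<le> card U"
    using assms(4) card_Diff1_le[of U j] by linarith
  moreover have "{l\<in>U. v l < v j} = {l\<in>U - {j}. v l < v j}"
    by auto
  ultimately show ?thesis
    using kth_smallest_less_iff[of U k v "v j"] kth_smallest_less_iff[of "U - {j}" k v "v j"] assms
    by (simp add: not_less[symmetric])
qed

lemma kth_smallest_Suc_insert:
  assumes "finite U" "j \<in> U" "1 \<le> k" "k \<le> card (U - {j})"
    and below: "v j \<le> kth_smallest v (U - {j}) k"
  shows "kth_smallest v U (k + 1) = kth_smallest v (U - {j}) k"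
proof -
  have cU: "card U = card (U - {j}) + 1"
    using card_Suc_Diff1[OF assms(1,2)] by simp
  have split: "card {l\<in>U. v l \<le> t} = card {l\<in>U - {j}. v l \<le> t} + (if v j \<le> t then 1 else 0)" for t
  proof -
    have "{l\<in>U. v l \<le> t} = (if v j \<le> t then insert j {l\<in>U - {j}. v l \<le> t} else {l\<in>U - {j}. v l \<le> t})"
      using assms(2) by auto
    then show ?thesis
      using assms(1) by simp
  qed
  have "kth_smallest v U (k + 1) \<le> t \<longleftrightarrow> kth_smallest v (U - {j}) k \<le> t" for t
  proof -
    have "kth_smallest v U (k + 1) \<le> t \<longleftrightarrow> k + 1 \<le> card {l\<in>U. v l \<le> t}"
      by (rule kth_smallest_le_iff) (use assms(1) assms(4) cU in auto)
    moreover have "kth_smallest v (U - {j}) k \<le> t \<longleftrightarrow> k \<le> card {l\<in>U - {j}. v l \<le> t}"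
      by (rule kth_smallest_le_iff) (use assms(1,3,4) in auto)
    ultimately show ?thesis
      using split[of t] below by (cases "v j \<le> t") auto
  qed
  then show ?thesis
    by (meson order.antisym order.refl)
qed

section \<open>Conformal misses\<close>

lemma conf_quantile_cong:
  "(\<And>s. s \<in> S \<Longrightarrow> v s = w s) \<Longrightarrow> conf_quantile a v S = conf_quantile a w S"
  unfolding conf_quantile_def Let_def by (simp add: kth_smallest_cong[of S v w])

lemma conf_quantile_reindex:
  "inj_on s S \<Longrightarrow> conf_quantile a (v \<circ> s) S = conf_quantile a v (s ` S)"
  unfolding conf_quantile_def Let_def by (simp add: kth_smallest_reindex card_image)

lemma card_greater_plus_card_le:
  fixes R :: "'a \<Rightarrow> 'b::linorder"
  assumes "finite A"
  shows "card {l\<in>A. t < R l} + card {l\<in>A. R l \<le> t} = card A"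
proof -
  have "card ({l\<in>A. t < R l} \<union> {l\<in>A. R l \<le> t}) = card {l\<in>A. t < R l} + card {l\<in>A. R l \<le> t}"
    using assms by (intro card_Un_disjoint) auto
  moreover have "{l\<in>A. t < R l} \<union> {l\<in>A. R l \<le> t} = A"
    by auto
  ultimately show ?thesis
    by simp
qed

definition conformal_misses :: "real \<Rightarrow> (nat \<Rightarrow> real) \<Rightarrow> nat set \<Rightarrow> nat set" where
  "conformal_misses a R A = {l\<in>A. conf_quantile a R (A - {l}) < ereal (R l)}"

lemma conformal_misses_eq:
  assumes "finite A" "a < 1"
  defines "k \<equiv> nat \<lceil>(1 - a) * real (card A)\<rceil>"
  shows "conformal_misses a R A = (if k < card A then {l\<in>A. kth_smallest R A k < R l} else {})"
proof (cases "A = {}")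
  case False
  have "0 < (1 - a) * real (card A)"
    using False assms by (simp add: card_gt_0_iff)
  then have k1: "1 \<le> k"
    unfolding k_def by linarith
  have quantile: "conf_quantile a R (A - {l}) =
      (if k < card A then ereal (kth_smallest R (A - {l}) k) else \<infinity>)" if "l \<in> A" for l
  proof -
    have "real (card (A - {l})) + 1 = real (card A)"
      using that assms(1) False by (simp add: card_gt_0_iff of_nat_diff Suc_leI)
    then show ?thesis
      using that assms(1) by (auto simp: conf_quantile_def k_def)
  qed
  have "kth_smallest R (A - {l}) k < R l \<longleftrightarrow> kth_smallest R A k < R l"
    if "l \<in> A" "k < card A" for l
  proof -
    have "{i\<in>A - {l}. R i < R l} = {i\<in>A. R i < R l}"
      by auto
    then show ?thesis
      using kth_smallest_less_iff[of "A - {l}" k R "R l"] kth_smallest_less_iff[of A k R "R l"]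
        that assms(1) k1 by simp
  qed
  then show ?thesis
    unfolding conformal_misses_def using quantile by auto
qed (simp add: conformal_misses_def)

lemma card_conformal_misses_le:
  assumes "finite A" "0 < a" "a < 1"
  shows "real (card (conformal_misses a R A)) \<le> a * real (card A)"
proof -
  define k where "k = nat \<lceil>(1 - a) * real (card A)\<rceil>"
  show ?thesis
  proof (cases "k < card A")
    case True
    then have "0 < (1 - a) * real (card A)"
      using assms(3) by simp
    then have "1 \<le> k" "(1 - a) * real (card A) \<le> real k"
      unfolding k_def by linarith+
    moreover have "k \<le> card {l\<in>A. R l \<le> kth_smallest R A k}"
      using card_le_kth_smallest[OF assms(1)] True calculation(1) by simp
    ultimately show ?thesis
      using conformal_misses_eq[OF assms(1,3), of R] card_greater_plus_card_le[OF assms(1), of "kth_smallest R A k" R]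
        True
      unfolding k_def[symmetric]
      by (auto simp: algebra_simps)
  next
    case False
    then show ?thesis
      using conformal_misses_eq[OF assms(1,3), of R] assms(2) unfolding k_def[symmetric] by simp
  qed
qed

lemma card_conformal_misses_ge:
  assumes "finite A" "0 < a" "a < 1" "inj_on R A"
  shows "a * real (card A) - 1 \<le> real (card (conformal_misses a R A))"
proof -
  define k where "k = nat \<lceil>(1 - a) * real (card A)\<rceil>"
  have "0 \<le> (1 - a) * real (card A)"
    using assms(3) by simp
  then have "real k = of_int \<lceil>(1 - a) * real (card A)\<rceil>"
    unfolding k_def by simp
  then have k_less: "real k < (1 - a) * real (card A) + 1"
    by linarith
  show ?thesis
  proof (cases "k < card A")
    case True
    then have "0 < (1 - a) * real (card A)"
      using assms(3) by simp
    then have "1 \<le> k"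
      unfolding k_def by linarith
    then have "card {l\<in>A. R l \<le> kth_smallest R A k} = k"
      using card_le_kth_smallest_inj[OF assms(1) _ _ assms(4)] True by simp
    then show ?thesis
      using conformal_misses_eq[OF assms(1,3), of R] card_greater_plus_card_le[OF assms(1), of "kth_smallest R A k" R]
        True k_less
      unfolding k_def[symmetric]
      by (auto simp: algebra_simps)
  next
    case False
    then show ?thesis
      using conformal_misses_eq[OF assms(1,3), of R] k_less unfolding k_def[symmetric]
      by (auto simp: algebra_simps)
  qed
qed

lemma conformal_misses_cong:
  assumes "\<And>s. s \<in> A \<Longrightarrow> R s = R' s"
  shows "conformal_misses a R A = conformal_misses a R' A"
proof -
  have "conf_quantile a R (A - {l}) = conf_quantile a R' (A - {l})" for l
    using assms by (intro conf_quantile_cong) auto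
  with assms show ?thesis
    by (auto simp: conformal_misses_def)
qed

lemma mem_conformal_misses_reindex:
  assumes "inj_on \<sigma> A" "l \<in> A"
  shows "l \<in> conformal_misses a (R \<circ> \<sigma>) A \<longleftrightarrow> \<sigma> l \<in> conformal_misses a R (\<sigma> ` A)"
proof -
  have "\<sigma> ` (A - {l}) = \<sigma> ` A - {\<sigma> l}"
    using assms by (auto simp: inj_on_def)
  then show ?thesis
    using assms conf_quantile_reindex[of \<sigma> "A - {l}" a R] inj_on_diff[OF assms(1)]
    by (auto simp: conformal_misses_def)
qed

text \<open>Here \<open>y i\<close> is the (score, residual) pair of point \<open>i\<close>.\<close>
definition selected_misses :: "real \<Rightarrow> nat set \<Rightarrow> real \<Rightarrow> (nat \<Rightarrow> real \<times> real) \<Rightarrow> nat set" where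
  "selected_misses a K \<tau> y = conformal_misses a (\<lambda>i. snd (y i)) {i\<in>K. fst (y i) \<le> \<tau>}"

lemma mem_selected_misses_iff:
  "l \<in> selected_misses a K \<tau> y \<longleftrightarrow> l \<in> K \<and> fst (y l) \<le> \<tau> \<and>
     conf_quantile a (\<lambda>i. snd (y i)) {i\<in>K - {l}. fst (y i) \<le> \<tau>} < ereal (snd (y l))"
proof -
  have "{i\<in>K. fst (y i) \<le> \<tau>} - {l} = {i\<in>K - {l}. fst (y i) \<le> \<tau>}"
    by auto
  then show ?thesis
    by (auto simp: selected_misses_def conformal_misses_def)
qed

lemma selected_misses_subset: "selected_misses a K \<tau> y \<subseteq> {i\<in>K. fst (y i) \<le> \<tau>}"
  by (auto simp: selected_misses_def conformal_misses_def)

lemma selected_misses_cong: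
  "(\<And>i. i \<in> K \<Longrightarrow> y i = y' i) \<Longrightarrow> selected_misses a K \<tau> y = selected_misses a K \<tau> y'"
proof -
  assume same: "\<And>i. i \<in> K \<Longrightarrow> y i = y' i"
  then have "{i\<in>K. fst (y i) \<le> \<tau>} = {i\<in>K. fst (y' i) \<le> \<tau>}"
    by auto
  moreover have "conformal_misses a (\<lambda>i. snd (y i)) A = conformal_misses a (\<lambda>i. snd (y' i)) A"
    if "A \<subseteq> K" for A
    using same that by (intro conformal_misses_cong) auto
  ultimately show ?thesis
    unfolding selected_misses_def by (metis (no_types, lifting) mem_Collect_eq subsetI)
qed

lemma mem_selected_misses_permute:
  assumes "bij_betw \<sigma> K K" "j \<in> K"
  shows "j \<in> selected_misses a K \<tau> (\<lambda>i. y (\<sigma> i)) \<longleftrightarrow> \<sigma> j \<in> selected_misses a K \<tau> y"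
proof -
  let ?A = "{i\<in>K. fst (y (\<sigma> i)) \<le> \<tau>}"
  have inj: "inj_on \<sigma> ?A"
    using assms(1) by (auto simp: bij_betw_def intro: inj_on_subset)
  have image: "\<sigma> ` ?A = {i\<in>K. fst (y i) \<le> \<tau>}"
    using assms(1) by (auto simp: bij_betw_def)
  show ?thesis
  proof (cases "j \<in> ?A")
    case True
    then show ?thesis
      using mem_conformal_misses_reindex[OF inj True, of a "\<lambda>i. snd (y i)"] image
      by (simp add: selected_misses_def comp_def)
  next
    case False
    then have "\<sigma> j \<notin> {i\<in>K. fst (y i) \<le> \<tau>}"
      using assms by (auto simp: bij_betw_def)
    then show ?thesis
      using False by (auto simp: selected_misses_def conformal_misses_def)
  qed
qed

section \<open>Measurability and integration\<close>

lemma borel_measurable_card_Collect: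
  assumes "finite S" "\<And>j. j \<in> S \<Longrightarrow> {w\<in>space M. P j w} \<in> sets M"
  shows "(\<lambda>w. real (card {j\<in>S. P j w})) \<in> borel_measurable M"
proof -
  have "real (card {j\<in>S. P j w}) = (\<Sum>j\<in>S. indicator {w\<in>space M. P j w} w)" if "w \<in> space M" for w
    using that assms(1) by (simp add: indicator_def sum.If_cases Int_def)
  moreover have "(\<lambda>w. \<Sum>j\<in>S. indicator {w\<in>space M. P j w} w :: real) \<in> borel_measurable M"
    using assms(2) by (intro borel_measurable_sum borel_measurable_indicator)
  ultimately show ?thesis
    by (subst measurable_cong) auto
qed

lemma borel_measurable_kth_smallest:
  assumes fin: "finite S" and f: "\<And>i. i \<in> S \<Longrightarrow> (\<lambda>w. f w i) \<in> borel_measurable M"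
  shows "(\<lambda>w. kth_smallest (f w) S r) \<in> borel_measurable M"
proof -
  have in_range: "(\<lambda>w. kth_smallest (f w) S r) \<in> borel_measurable M"
    if "1 \<le> r" "r \<le> card S" for r
  proof (subst borel_measurable_iff_le, intro allI)
    fix t
    have "(\<lambda>w. real (card {l\<in>S. f w l \<le> t})) \<in> borel_measurable M"
      using f by (intro borel_measurable_card_Collect[OF fin]) measurable
    then have "{w\<in>space M. real r \<le> real (card {l\<in>S. f w l \<le> t})} \<in> sets M"
      by measurable
    moreover have "{w\<in>space M. kth_smallest (f w) S r \<le> t} = {w\<in>space M. real r \<le> real (card {l\<in>S. f w l \<le> t})}"
      using kth_smallest_le_iff[OF fin that] by auto
    ultimately show "{w\<in>space M. kth_smallest (f w) S r \<le> t} \<in> sets M"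
      by simp
  qed
  have pos: "(\<lambda>w. kth_smallest (f w) S r) \<in> borel_measurable M" if "1 \<le> r" for r
    using in_range[OF that] kth_smallest_out_of_range[OF fin] by (cases "r \<le> card S") auto
  moreover have "kth_smallest v S 0 = kth_smallest v S 1" for v
    by (simp add: kth_smallest_def)
  ultimately show ?thesis
    by (cases r) (simp_all add: pos)
qed

lemma borel_measurable_kth_smallest_index:
  assumes "finite S" "\<And>i. i \<in> S \<Longrightarrow> (\<lambda>w. f w i) \<in> borel_measurable M"
    and "r \<in> measurable M (count_space UNIV)"
  shows "(\<lambda>w. kth_smallest (f w) S (r w)) \<in> borel_measurable M"
  using borel_measurable_kth_smallest[OF assms(1,2)] assms(3)
  by (rule measurable_compose_countable[where f = "\<lambda>r w. kth_smallest (f w) S r"])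

lemma measurable_Collect_finite:
  assumes "finite C" "\<And>i. i \<in> C \<Longrightarrow> {w\<in>space M. P i w} \<in> sets M"
  shows "(\<lambda>w. {i\<in>C. P i w}) \<in> measurable M (count_space (Pow C))"
proof (subst measurable_count_space_eq_countable)
  show "countable (Pow C)"
    using assms(1) by (simp add: countable_finite)
  have "(\<lambda>w. {i\<in>C. P i w}) -` {B} \<inter> space M \<in> sets M" if "B \<subseteq> C" for B
  proof -
    have "{w\<in>space M. P i w \<longleftrightarrow> i \<in> B} \<in> sets M" if "i \<in> C" for i
      using assms(2)[OF that] by (cases "i \<in> B") (auto simp: Compl_eq_Diff_UNIV set_diff_eq)
    then have "{w\<in>space M. \<forall>i\<in>C. P i w \<longleftrightarrow> i \<in> B} \<in> sets M"
      by (rule sets.sets_Collect_finite_All[OF _ assms(1)])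
    moreover have "(\<lambda>w. {i\<in>C. P i w}) -` {B} \<inter> space M = {w\<in>space M. \<forall>i\<in>C. P i w \<longleftrightarrow> i \<in> B}"
      using that by auto
    ultimately show ?thesis
      by simp
  qed
  then show "(\<lambda>w. {i\<in>C. P i w}) \<in> space M \<rightarrow> Pow C \<and>
      (\<forall>B\<in>Pow C. (\<lambda>w. {i\<in>C. P i w}) -` {B} \<inter> space M \<in> sets M)"
    by auto
qed

lemma borel_measurable_conf_quantile:
  assumes "finite C" "\<And>i. i \<in> C \<Longrightarrow> (\<lambda>w. f w i) \<in> borel_measurable M"
    and "B \<in> measurable M (count_space (Pow C))"
  shows "(\<lambda>w. conf_quantile a (f w) (B w)) \<in> borel_measurable M"
proof (rule measurable_compose_countable'[where f = "\<lambda>S w. conf_quantile a (f w) S", OF _ assms(3)])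
  show "countable (Pow C)"
    using assms(1) by (simp add: countable_finite)
  fix S
  assume "S \<in> Pow C"
  then have "(\<lambda>w. kth_smallest (f w) S r) \<in> borel_measurable M" for r
    using assms(1,2) by (intro borel_measurable_kth_smallest) (auto intro: finite_subset)
  then show "(\<lambda>w. conf_quantile a (f w) S) \<in> borel_measurable M"
    unfolding conf_quantile_def Let_def by measurable
qed

lemma borel_measurable_real_of_nat:
  "f \<in> measurable M (count_space UNIV) \<Longrightarrow> (\<lambda>w. real (f w)) \<in> borel_measurable M"
  by (erule measurable_compose) simp

lemma abs_if_divide_le_1: "\<bar>(if b then 1 else 0) / real (k::nat)\<bar> \<le> (1::real)"
  by (cases k) auto

lemma (in finite_measure) integral_card_Collect:
  assumes "finite K" "\<And>l. l \<in> K \<Longrightarrow> {y\<in>space M. Q l y} \<in> sets M"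
  shows "integrable M (\<lambda>y. real (card {l\<in>K. Q l y}))"
    and "(\<integral>y. real (card {l\<in>K. Q l y}) \<partial>M) = (\<Sum>l\<in>K. measure M {y\<in>space M. Q l y})"
proof -
  have card_eq: "real (card {l\<in>K. Q l y}) = (\<Sum>l\<in>K. indicator {y\<in>space M. Q l y} y)"
    if "y \<in> space M" for y
    using that assms(1) by (simp add: indicator_def sum.If_cases Int_def)
  have integrable: "integrable M (indicator {y\<in>space M. Q l y} :: _ \<Rightarrow> real)" if "l \<in> K" for l
    using assms(2)[OF that] by (simp add: integrable_indicator_iff less_top[symmetric])
  then show "integrable M (\<lambda>y. real (card {l\<in>K. Q l y}))"
    by (subst Bochner_Integration.integrable_cong[OF refl card_eq]) auto
  have "(\<integral>y. real (card {l\<in>K. Q l y}) \<partial>M) = (\<integral>y. (\<Sum>l\<in>K. indicator {y\<in>space M. Q l y} y) \<partial>M)"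
    by (rule Bochner_Integration.integral_cong[OF refl card_eq])
  also have "\<dots> = (\<Sum>l\<in>K. measure M {y\<in>space M. Q l y})"
    using integrable assms(2) by (simp add: Bochner_Integration.integral_sum)
  finally show "(\<integral>y. real (card {l\<in>K. Q l y}) \<partial>M) = (\<Sum>l\<in>K. measure M {y\<in>space M. Q l y})" .
qed

lemma (in prob_space) integral_if_const_divide:
  assumes "{y\<in>space M. P y} \<in> sets M"
  shows "integrable M (\<lambda>y. (if P y then c else 0) / d :: real)"
    and "(\<integral>y. (if P y then c else 0) / d \<partial>M) = c * prob {y\<in>space M. P y} / d"
proof -
  have eq: "(if P y then c else 0) / d = c / d * indicator {y\<in>space M. P y} y" if "y \<in> space M" for y
    using that by (simp add: indicator_def)
  have "integrable M (\<lambda>y. c / d * indicator {y\<in>space M. P y} y :: real)"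
    using assms by (simp add: integrable_indicator_iff less_top[symmetric])
  then show "integrable M (\<lambda>y. (if P y then c else 0) / d :: real)"
    by (subst Bochner_Integration.integrable_cong[OF refl eq]) auto
  have "(\<integral>y. (if P y then c else 0) / d \<partial>M) = (\<integral>y. c / d * indicator {y\<in>space M. P y} y \<partial>M)"
    by (rule Bochner_Integration.integral_cong[OF refl eq])
  then show "(\<integral>y. (if P y then c else 0) / d \<partial>M) = c * prob {y\<in>space M. P y} / d"
    using assms by simp
qed

lemma integral_eq_sum_AE:
  fixes f :: "'a \<Rightarrow> real"
  assumes "finite I" "f \<in> borel_measurable M" "\<And>i. i \<in> I \<Longrightarrow> integrable M (g i)"
    and "AE x in M. f x = (\<Sum>i\<in>I. g i x)"
  shows "integral\<^sup>L M f = (\<Sum>i\<in>I. integral\<^sup>L M (g i))"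
proof -
  have "integral\<^sup>L M f = (\<integral>x. (\<Sum>i\<in>I. g i x) \<partial>M)"
    using assms(2-4) by (intro integral_cong_AE) auto
  also have "\<dots> = (\<Sum>i\<in>I. integral\<^sup>L M (g i))"
    using assms(3) by (rule Bochner_Integration.integral_sum)
  finally show ?thesis .
qed

lemma (in prob_space) distr_restrict_iid:
  assumes "I \<noteq> {}" "\<And>i. i \<in> I \<Longrightarrow> random_variable borel (W i)"
    and "indep_vars (\<lambda>_. borel) W I" and "\<And>i. i \<in> I \<Longrightarrow> distr M borel (W i) = D"
  shows "distr M (Pi\<^sub>M I (\<lambda>_. borel)) (\<lambda>\<omega>. \<lambda>i\<in>I. W i \<omega>) = Pi\<^sub>M I (\<lambda>_. D)"
  using indep_vars_iff_distr_eq_PiM'[where I = I and M' = "\<lambda>_. borel" and X = W] assms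
  by (auto intro: PiM_cong)

lemma (in prob_space) iid_compose:
  assumes Z: "\<And>i. i \<in> I \<Longrightarrow> Z i \<in> measurable M N" and "indep_vars (\<lambda>_. N) Z I"
    and "\<And>i j. i \<in> I \<Longrightarrow> j \<in> I \<Longrightarrow> distr M N (Z i) = distr M N (Z j)"
    and \<phi>: "\<phi> \<in> measurable N N'"
  shows "\<And>i. i \<in> I \<Longrightarrow> (\<lambda>\<omega>. \<phi> (Z i \<omega>)) \<in> measurable M N'"
    and "indep_vars (\<lambda>_. N') (\<lambda>i \<omega>. \<phi> (Z i \<omega>)) I"
    and "\<And>i j. i \<in> I \<Longrightarrow> j \<in> I \<Longrightarrow> distr M N' (\<lambda>\<omega>. \<phi> (Z i \<omega>)) = distr M N' (\<lambda>\<omega>. \<phi> (Z j \<omega>))"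
proof -
  show "(\<lambda>\<omega>. \<phi> (Z i \<omega>)) \<in> measurable M N'" if "i \<in> I" for i
    using Z[OF that] \<phi> by (rule measurable_compose)
  show "indep_vars (\<lambda>_. N') (\<lambda>i \<omega>. \<phi> (Z i \<omega>)) I"
    using assms(2) \<phi> by (rule indep_vars_compose2)
  have "distr M N' (\<lambda>\<omega>. \<phi> (Z i \<omega>)) = distr (distr M N (Z i)) N' \<phi>" if "i \<in> I" for i
    using Z[OF that] \<phi> by (simp add: distr_distr comp_def)
  then show "distr M N' (\<lambda>\<omega>. \<phi> (Z i \<omega>)) = distr M N' (\<lambda>\<omega>. \<phi> (Z j \<omega>))" if "i \<in> I" "j \<in> I" for i j
    using assms(3)[OF that] that by simp
qed

section \<open>Exchangeability under an i.i.d. law\<close>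

locale score_residual_law =
  fixes D :: "(real \<times> real) measure" and F :: "real \<Rightarrow> real"
  assumes prob_space_D: "prob_space D" and sets_D: "sets D = sets borel"
    and score_no_atoms: "\<And>c. emeasure D {z\<in>space D. fst z = c} = 0"
    and residual_no_atoms: "\<And>c. emeasure D {z\<in>space D. snd z = c} = 0"
    and cdf_F: "\<And>t. F t = measure D {z\<in>space D. fst z \<le> t}"
begin

sublocale PD: product_prob_space "\<lambda>_::nat. D"
  using prob_space_D
  by (simp add: product_prob_space_def product_sigma_finite_def prob_space_imp_sigma_finite
      product_prob_space_axioms_def)

lemma space_D: "space D = UNIV"
  using sets_eq_imp_space_eq[OF sets_D] by simp

lemma measurable_D_iff: "f \<in> measurable D N \<longleftrightarrow> f \<in> measurable borel N"
  using measurable_cong_sets[OF sets_D refl] by blast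

lemma fst_measurable_D [measurable]: "fst \<in> borel_measurable D"
  and snd_measurable_D [measurable]: "snd \<in> borel_measurable D"
  unfolding measurable_D_iff by (intro borel_measurable_continuous_onI continuous_intros)+

lemma prob_space_PiM_D: "finite K \<Longrightarrow> prob_space (Pi\<^sub>M K (\<lambda>_. D))"
  using prob_space_D by (intro prob_space_PiM) auto

lemma F_nonneg: "0 \<le> F t"
  by (simp add: cdf_F)

lemma F_mono: "mono F"
proof (rule monoI)
  fix x y :: real
  assume "x \<le> y"
  then have "{z\<in>space D. fst z \<le> x} \<subseteq> {z\<in>space D. fst z \<le> y}"
    by auto
  moreover have "{z\<in>space D. fst z \<le> y} \<in> sets D"
    by measurable
  ultimately show "F x \<le> F y"
    unfolding cdf_F by (rule PD.M.finite_measure_mono)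
qed

lemma measurable_F [measurable]: "F \<in> borel_measurable borel"
  by (rule borel_measurable_mono[OF F_mono])

lemma measurable_PiM_score:
  "i \<in> K \<Longrightarrow> (\<lambda>w. fst (w i)) \<in> borel_measurable (Pi\<^sub>M K (\<lambda>_. D))"
  and measurable_PiM_residual:
  "i \<in> K \<Longrightarrow> (\<lambda>w. snd (w i)) \<in> borel_measurable (Pi\<^sub>M K (\<lambda>_. D))"
  by measurable

lemma measure_PiM_score_le:
  assumes "finite K" "j \<in> K"
  shows "measure (Pi\<^sub>M K (\<lambda>_. D)) {y\<in>space (Pi\<^sub>M K (\<lambda>_. D)). fst (y j) \<le> \<tau>} = F \<tau>"
proof -
  have "{z\<in>space D. fst z \<le> \<tau>} \<in> sets D"
    by measurable
  moreover have "distr (Pi\<^sub>M K (\<lambda>_. D)) D (\<lambda>y. y j) = D"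
    using distr_PiM_component[of K "\<lambda>_. D" j] prob_space_D assms by auto
  ultimately have "measure (Pi\<^sub>M K (\<lambda>_. D)) ((\<lambda>y. y j) -` {z\<in>space D. fst z \<le> \<tau>} \<inter> space (Pi\<^sub>M K (\<lambda>_. D)))
      = F \<tau>"
    using measure_distr[of "\<lambda>y. y j" "Pi\<^sub>M K (\<lambda>_. D)" D] assms(2) by (simp add: cdf_F)
  moreover have "(\<lambda>y. y j) -` {z\<in>space D. fst z \<le> \<tau>} \<inter> space (Pi\<^sub>M K (\<lambda>_. D))
      = {y\<in>space (Pi\<^sub>M K (\<lambda>_. D)). fst (y j) \<le> \<tau>}"
    using assms(2) by (auto simp: space_D space_PiM)
  ultimately show ?thesis
    by simp
qed

text \<open>Integrating out coordinate \<open>a\<close> first, the tie \<open>\<phi> (w a) = \<phi> (w b)\<close> pins \<open>\<phi> (w a)\<close> to a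
  single value, which has probability zero.\<close>
lemma AE_PiM_no_tie:
  fixes \<phi> :: "real \<times> real \<Rightarrow> real" and K :: "nat set"
  assumes K: "finite K" "a \<in> K" "b \<in> K" "a \<noteq> b"
    and \<phi>[measurable]: "\<phi> \<in> borel_measurable D"
    and no_atoms: "\<And>c. emeasure D {z\<in>space D. \<phi> z = c} = 0"
  shows "AE w in Pi\<^sub>M K (\<lambda>_. D). \<phi> (w a) \<noteq> \<phi> (w b)"
proof -
  let ?K = "K - {a}"
  have K_eq: "K = insert a ?K"
    using K by auto
  let ?N = "{w\<in>space (Pi\<^sub>M K (\<lambda>_. D)). \<phi> (w a) = \<phi> (w b)}"
  have "(\<lambda>w. \<phi> (w a)) \<in> borel_measurable (Pi\<^sub>M K (\<lambda>_. D))"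
      "(\<lambda>w. \<phi> (w b)) \<in> borel_measurable (Pi\<^sub>M K (\<lambda>_. D))"
    using K by measurable
  then have N[measurable]: "?N \<in> sets (Pi\<^sub>M K (\<lambda>_. D))"
    by (rule borel_measurable_eq)
  have "emeasure (Pi\<^sub>M K (\<lambda>_. D)) ?N = (\<integral>\<^sup>+w. indicator ?N w \<partial>Pi\<^sub>M (insert a ?K) (\<lambda>_. D))"
    using N K_eq by simp
  also have "\<dots> = (\<integral>\<^sup>+x. (\<integral>\<^sup>+y. indicator ?N (x(a := y)) \<partial>D) \<partial>Pi\<^sub>M ?K (\<lambda>_. D))"
    by (rule PD.product_nn_integral_insert) (use K N in \<open>simp_all add: insert_absorb\<close>)
  also have "\<dots> = (\<integral>\<^sup>+x. 0 \<partial>Pi\<^sub>M ?K (\<lambda>_. D))"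
  proof (rule nn_integral_cong)
    fix x
    assume x: "x \<in> space (Pi\<^sub>M ?K (\<lambda>_. D))"
    have "indicator ?N (x(a := y)) = (indicator {z\<in>space D. \<phi> z = \<phi> (x b)} y :: ennreal)" for y
      using x K by (auto simp: indicator_def space_PiM PiE_iff space_D extensional_def)
    then have "(\<integral>\<^sup>+y. indicator ?N (x(a := y)) \<partial>D) = emeasure D {z\<in>space D. \<phi> z = \<phi> (x b)}"
      by (simp add: nn_integral_indicator)
    then show "(\<integral>\<^sup>+y. indicator ?N (x(a := y)) \<partial>D) = 0"
      using no_atoms by simp
  qed
  finally show ?thesis
    by (subst AE_iff_measurable[OF N]) auto
qed

lemma AE_PiM_inj_on:
  fixes \<phi> :: "real \<times> real \<Rightarrow> real" and K :: "nat set"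
  assumes "finite K" "S \<subseteq> K"
    and "\<phi> \<in> borel_measurable D" "\<And>c. emeasure D {z\<in>space D. \<phi> z = c} = 0"
  shows "AE w in Pi\<^sub>M K (\<lambda>_. D). inj_on (\<lambda>i. \<phi> (w i)) S"
proof -
  have "finite (S \<times> S)"
    using assms(1,2) finite_subset by blast
  moreover have "AE w in Pi\<^sub>M K (\<lambda>_. D). a \<noteq> b \<longrightarrow> \<phi> (w a) \<noteq> \<phi> (w b)" if "(a, b) \<in> S \<times> S" for a b
    using AE_PiM_no_tie[OF assms(1) _ _ _ assms(3,4), of a b] that assms(2)
    by (cases "a = b") auto
  ultimately have "AE w in Pi\<^sub>M K (\<lambda>_. D). \<forall>(a, b)\<in>S \<times> S. a \<noteq> b \<longrightarrow> \<phi> (w a) \<noteq> \<phi> (w b)"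
    by (subst AE_finite_all) auto
  then show ?thesis
    by eventually_elim (auto simp: inj_on_def)
qed

lemma sets_selected_misses:
  assumes "finite K"
  shows "{y\<in>space (Pi\<^sub>M K (\<lambda>_. D)). l \<in> selected_misses a K \<tau> y} \<in> sets (Pi\<^sub>M K (\<lambda>_. D))"
proof (cases "l \<in> K")
  case True
  have [measurable]: "(\<lambda>y. fst (y l)) \<in> borel_measurable (Pi\<^sub>M K (\<lambda>_. D))"
    "(\<lambda>y. snd (y l)) \<in> borel_measurable (Pi\<^sub>M K (\<lambda>_. D))"
    using True by (simp_all add: measurable_PiM_score measurable_PiM_residual)
  have "(\<lambda>y. {i\<in>K - {l}. fst (y i) \<le> \<tau>}) \<in> measurable (Pi\<^sub>M K (\<lambda>_. D)) (count_space (Pow (K - {l})))"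
    using assms by (intro measurable_Collect_finite borel_measurable_le) (simp_all add: measurable_PiM_score)
  then have [measurable]: "(\<lambda>y. conf_quantile a (\<lambda>i. snd (y i)) {i\<in>K - {l}. fst (y i) \<le> \<tau>})
      \<in> borel_measurable (Pi\<^sub>M K (\<lambda>_. D))"
    using assms
    by (intro borel_measurable_conf_quantile[where C = "K - {l}"]) (simp_all add: measurable_PiM_residual)
  show ?thesis
    unfolding mem_selected_misses_iff using True by measurable
next
  case False
  then show ?thesis
    by (simp add: mem_selected_misses_iff)
qed

text \<open>Exchangeability: permuting the coordinates of the product measure is measure preserving.\<close>
lemma measure_selected_misses_eq:
  assumes "finite K" "j \<in> K" "l \<in> K"
  shows "measure (Pi\<^sub>M K (\<lambda>_. D)) {y\<in>space (Pi\<^sub>M K (\<lambda>_. D)). j \<in> selected_misses a K \<tau> y}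
       = measure (Pi\<^sub>M K (\<lambda>_. D)) {y\<in>space (Pi\<^sub>M K (\<lambda>_. D)). l \<in> selected_misses a K \<tau> y}"
proof -
  let ?P = "Pi\<^sub>M K (\<lambda>_. D)"
  let ?E = "\<lambda>j. {y\<in>space ?P. j \<in> selected_misses a K \<tau> y}"
  define \<sigma> where "\<sigma> = Transposition.transpose j l"
  have \<sigma>: "bij_betw \<sigma> K K" "\<sigma> j = l"
    using assms by (simp_all add: \<sigma>_def)
  define r where "r y = (\<lambda>i\<in>K. y (\<sigma> i))" for y :: "nat \<Rightarrow> real \<times> real"
  have "\<sigma> \<in> K \<rightarrow> K"
    using \<sigma>(1) bij_betwE by blast
  then have r_distr: "distr ?P ?P r = ?P"
    using distr_PiM_reindex[of K "\<lambda>_. D" \<sigma> K] prob_space_D \<sigma>(1)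
    unfolding r_def bij_betw_def by simp
  have r_measurable: "r \<in> measurable ?P ?P"
    unfolding r_def using \<sigma>(1)
    by (intro measurable_restrict measurable_component_singleton) (auto simp: bij_betw_def)
  have "r -` ?E j \<inter> space ?P = ?E l"
  proof -
    have "j \<in> selected_misses a K \<tau> (r y) \<longleftrightarrow> l \<in> selected_misses a K \<tau> y" for y
      using selected_misses_cong[of K "r y" "\<lambda>i. y (\<sigma> i)" a \<tau>]
        mem_selected_misses_permute[OF \<sigma>(1) assms(2), of a \<tau> y] \<sigma>(2)
      by (simp add: r_def)
    then show ?thesis
      using measurable_space[OF r_measurable] by auto
  qed
  then show ?thesis
    using measure_distr[OF r_measurable, of "?E j"] sets_selected_misses[OF assms(1)] r_distr
    by simp
qed

lemma integral_card_selected_misses: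
  assumes "finite K" "j \<in> K"
  shows "integrable (Pi\<^sub>M K (\<lambda>_. D)) (\<lambda>y. real (card (selected_misses a K \<tau> y)))"
    and "(\<integral>y. real (card (selected_misses a K \<tau> y)) \<partial>Pi\<^sub>M K (\<lambda>_. D)) =
      real (card K) * measure (Pi\<^sub>M K (\<lambda>_. D)) {y\<in>space (Pi\<^sub>M K (\<lambda>_. D)). j \<in> selected_misses a K \<tau> y}"
proof -
  interpret P: prob_space "Pi\<^sub>M K (\<lambda>_. D)"
    using prob_space_PiM_D[OF assms(1)] .
  have card_eq: "card (selected_misses a K \<tau> y) = card {l\<in>K. l \<in> selected_misses a K \<tau> y}" for y
  proof -
    have "{l\<in>K. l \<in> selected_misses a K \<tau> y} = selected_misses a K \<tau> y"
      using selected_misses_subset[of a K \<tau> y] by blast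
    then show ?thesis
      by simp
  qed
  show "integrable (Pi\<^sub>M K (\<lambda>_. D)) (\<lambda>y. real (card (selected_misses a K \<tau> y)))"
    unfolding card_eq using assms(1) sets_selected_misses[OF assms(1)] by (rule P.integral_card_Collect)
  show "(\<integral>y. real (card (selected_misses a K \<tau> y)) \<partial>Pi\<^sub>M K (\<lambda>_. D)) =
      real (card K) * measure (Pi\<^sub>M K (\<lambda>_. D)) {y\<in>space (Pi\<^sub>M K (\<lambda>_. D)). j \<in> selected_misses a K \<tau> y}"
    unfolding card_eq P.integral_card_Collect(2)[OF assms(1) sets_selected_misses[OF assms(1)]]
    using measure_selected_misses_eq[OF assms(1) _ assms(2)] by simp
qed

lemma integral_card_selected:
  assumes "finite K"
  shows "integrable (Pi\<^sub>M K (\<lambda>_. D)) (\<lambda>y. real (card {i\<in>K. fst (y i) \<le> \<tau>}))"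
    and "(\<integral>y. real (card {i\<in>K. fst (y i) \<le> \<tau>}) \<partial>Pi\<^sub>M K (\<lambda>_. D)) = real (card K) * F \<tau>"
proof -
  interpret P: prob_space "Pi\<^sub>M K (\<lambda>_. D)"
    using prob_space_PiM_D[OF assms(1)] .
  have sets: "{y\<in>space (Pi\<^sub>M K (\<lambda>_. D)). fst (y i) \<le> \<tau>} \<in> sets (Pi\<^sub>M K (\<lambda>_. D))" if "i \<in> K" for i
    using that by (intro borel_measurable_le) (simp_all add: measurable_PiM_score)
  show "integrable (Pi\<^sub>M K (\<lambda>_. D)) (\<lambda>y. real (card {i\<in>K. fst (y i) \<le> \<tau>}))"
    using assms sets by (rule P.integral_card_Collect)
  show "(\<integral>y. real (card {i\<in>K. fst (y i) \<le> \<tau>}) \<partial>Pi\<^sub>M K (\<lambda>_. D)) = real (card K) * F \<tau>"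
    using P.integral_card_Collect(2)[OF assms sets] measure_PiM_score_le[OF assms] by simp
qed

text \<open>Averaging the deterministic bounds on the number of conformal misses over the exchangeable
  coordinates of \<open>K\<close> turns them into bounds on the probability that a fixed \<open>j\<close> is a miss.\<close>
lemma prob_selected_miss_le:
  assumes "finite K" "j \<in> K" "0 < a" "a < 1"
  shows "measure (Pi\<^sub>M K (\<lambda>_. D)) {y\<in>space (Pi\<^sub>M K (\<lambda>_. D)). j \<in> selected_misses a K \<tau> y} \<le> a * F \<tau>"
proof -
  have "real (card K) * measure (Pi\<^sub>M K (\<lambda>_. D)) {y\<in>space (Pi\<^sub>M K (\<lambda>_. D)). j \<in> selected_misses a K \<tau> y}
      = (\<integral>y. real (card (selected_misses a K \<tau> y)) \<partial>Pi\<^sub>M K (\<lambda>_. D))"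
    using integral_card_selected_misses[OF assms(1,2)] by simp
  also have "\<dots> \<le> (\<integral>y. a * real (card {i\<in>K. fst (y i) \<le> \<tau>}) \<partial>Pi\<^sub>M K (\<lambda>_. D))"
    using integral_card_selected_misses(1)[OF assms(1,2)] integral_card_selected(1)[OF assms(1)]
      card_conformal_misses_le[OF _ assms(3,4)] assms(1)
    by (intro integral_mono) (auto simp: selected_misses_def)
  also have "\<dots> = real (card K) * (a * F \<tau>)"
    using integral_card_selected(2)[OF assms(1)] by simp
  finally have "real (card K) * measure (Pi\<^sub>M K (\<lambda>_. D))
      {y\<in>space (Pi\<^sub>M K (\<lambda>_. D)). j \<in> selected_misses a K \<tau> y} \<le> real (card K) * (a * F \<tau>)" .
  moreover have "0 < real (card K)"
    using assms(1,2) by (auto simp: card_gt_0_iff)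
  ultimately show ?thesis
    by (rule mult_left_le_imp_le)
qed

lemma prob_selected_miss_ge:
  assumes "finite K" "j \<in> K" "0 < a" "a < 1"
  shows "a * F \<tau> - 1 / real (card K)
    \<le> measure (Pi\<^sub>M K (\<lambda>_. D)) {y\<in>space (Pi\<^sub>M K (\<lambda>_. D)). j \<in> selected_misses a K \<tau> y}"
proof -
  interpret P: prob_space "Pi\<^sub>M K (\<lambda>_. D)"
    using prob_space_PiM_D[OF assms(1)] .
  have "AE y in Pi\<^sub>M K (\<lambda>_. D). inj_on (\<lambda>i. snd (y i)) K"
    using assms(1) residual_no_atoms by (intro AE_PiM_inj_on) auto
  then have "AE y in Pi\<^sub>M K (\<lambda>_. D).
      a * real (card {i\<in>K. fst (y i) \<le> \<tau>}) \<le> real (card (selected_misses a K \<tau> y)) + 1"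
  proof eventually_elim
    case (elim y)
    then have "inj_on (\<lambda>i. snd (y i)) {i\<in>K. fst (y i) \<le> \<tau>}"
      by (rule inj_on_subset) auto
    then show ?case
      using card_conformal_misses_ge[of "{i\<in>K. fst (y i) \<le> \<tau>}" a "\<lambda>i. snd (y i)"] assms
      by (simp add: selected_misses_def)
  qed
  then have "(\<integral>y. a * real (card {i\<in>K. fst (y i) \<le> \<tau>}) \<partial>Pi\<^sub>M K (\<lambda>_. D))
      \<le> (\<integral>y. real (card (selected_misses a K \<tau> y)) + 1 \<partial>Pi\<^sub>M K (\<lambda>_. D))"
    using integral_card_selected(1)[OF assms(1)] integral_card_selected_misses(1)[OF assms(1,2)]
    by (intro integral_mono_AE) auto
  then have "real (card K) * (a * F \<tau>)
      \<le> (\<integral>y. real (card (selected_misses a K \<tau> y)) + 1 \<partial>Pi\<^sub>M K (\<lambda>_. D))"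
    using integral_card_selected(2)[OF assms(1)] by (simp add: mult.left_commute)
  also have "\<dots> = real (card K) *
      measure (Pi\<^sub>M K (\<lambda>_. D)) {y\<in>space (Pi\<^sub>M K (\<lambda>_. D)). j \<in> selected_misses a K \<tau> y} + 1"
    using integral_card_selected_misses[OF assms(1,2)] by (simp add: P.prob_space)
  finally have "real (card K) * (a * F \<tau>) \<le> real (card K) * measure (Pi\<^sub>M K (\<lambda>_. D))
      {y\<in>space (Pi\<^sub>M K (\<lambda>_. D)). j \<in> selected_misses a K \<tau> y} + 1" .
  moreover have "0 < real (card K)"
    using assms(1,2) by (auto simp: card_gt_0_iff)
  ultimately show ?thesis
    by (simp add: field_simps)
qed

end

lemma score_residual_law_distr:
  fixes W :: "'a \<Rightarrow> real \<times> real"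
  assumes "prob_space M" "W \<in> borel_measurable M"
    and "\<And>t. measure M {\<omega>\<in>space M. fst (W \<omega>) = t} = 0"
    and "\<And>r. measure M {\<omega>\<in>space M. snd (W \<omega>) = r} = 0"
    and "\<And>t. F t = measure M {\<omega>\<in>space M. fst (W \<omega>) \<le> t}"
  shows "score_residual_law (distr M borel W) F"
proof (rule score_residual_law.intro)
  interpret M: prob_space M
    by (rule assms(1))
  have [measurable]: "(fst :: real \<times> real \<Rightarrow> real) \<in> borel_measurable borel"
    "(snd :: real \<times> real \<Rightarrow> real) \<in> borel_measurable borel"
    by (intro borel_measurable_continuous_onI continuous_intros)+
  show "prob_space (distr M borel W)"
    using assms(2) by (rule M.prob_space_distr)
  show "sets (distr M borel W) = sets borel"
    by simp
  show "emeasure (distr M borel W) {z\<in>space (distr M borel W). fst z = c} = 0" for c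
    using assms(2,3) by (simp add: emeasure_distr M.emeasure_eq_measure vimage_def Int_def conj_commute)
  show "emeasure (distr M borel W) {z\<in>space (distr M borel W). snd z = c} = 0" for c
    using assms(2,4) by (simp add: emeasure_distr M.emeasure_eq_measure vimage_def Int_def conj_commute)
  show "F t = measure (distr M borel W) {z\<in>space (distr M borel W). fst z \<le> t}" for t
    using assms(2,5) by (simp add: measure_distr vimage_def Int_def conj_commute)
qed

section \<open>The leave-one-out decomposition\<close>

definition false_coverage_proportion ::
    "real \<Rightarrow> ((nat \<Rightarrow> real) \<Rightarrow> nat) \<Rightarrow> nat set \<Rightarrow> nat set \<Rightarrow> (nat \<Rightarrow> real) \<Rightarrow> (nat \<Rightarrow> real) \<Rightarrow> real"
  where "false_coverage_proportion \<alpha> \<kappa> C U T R =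
    (let k = \<kappa> (restrict T U); Su = sel_test T U k; Q = conf_quantile \<alpha> R (sel_calib_plus T C U k)
     in real (card {j\<in>Su. Q < ereal (R j)}) / real (max (card Su) 1))"

definition fcr_gap :: "(real \<Rightarrow> real) \<Rightarrow> nat \<Rightarrow> ((nat \<Rightarrow> real) \<Rightarrow> nat) \<Rightarrow> nat set \<Rightarrow> (nat \<Rightarrow> real) \<Rightarrow> real"
  where "fcr_gap F n \<kappa> U T = 1 / ((real n + 1) * F (kth_smallest T U (\<kappa> (restrict T U) + 1)))"

lemma false_coverage_proportion_cong:
  assumes "\<And>i. i \<in> C \<union> U \<Longrightarrow> T i = T' i" "\<And>i. i \<in> C \<union> U \<Longrightarrow> R i = R' i"
  shows "false_coverage_proportion \<alpha> \<kappa> C U T R = false_coverage_proportion \<alpha> \<kappa> C U T' R'"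
proof -
  have kth: "kth_smallest T U r = kth_smallest T' U r" for r
    using assms(1) by (intro kth_smallest_cong) auto
  have "restrict T U = restrict T' U"
    using assms(1) by (intro restrict_ext) auto
  moreover have "sel_test T U k = sel_test T' U k" "sel_calib_plus T C U k = sel_calib_plus T' C U k" for k
    using assms(1) by (auto simp: sel_test_def sel_calib_plus_def kth)
  moreover have "conf_quantile \<alpha> R (sel_calib_plus T' C U k) = conf_quantile \<alpha> R' (sel_calib_plus T' C U k)" for k
    using assms(2) by (intro conf_quantile_cong) (auto simp: sel_calib_plus_def)
  moreover have "{j\<in>sel_test T' U k. Q < ereal (R j)} = {j\<in>sel_test T' U k. Q < ereal (R' j)}" for k Q
    using assms(2) by (auto simp: sel_test_def)
  ultimately show ?thesis
    by (simp add: false_coverage_proportion_def Let_def)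
qed

lemma fcr_gap_cong: "(\<And>i. i \<in> U \<Longrightarrow> T i = T' i) \<Longrightarrow> fcr_gap F n \<kappa> U T = fcr_gap F n \<kappa> U T'"
  unfolding fcr_gap_def by (metis (no_types, lifting) kth_smallest_cong restrict_ext)

locale selective_conformal = score_residual_law D F
  for D :: "(real \<times> real) measure" and F :: "real \<Rightarrow> real" +
  fixes C U :: "nat set" and \<alpha> t_u :: real and \<kappa> :: "(nat \<Rightarrow> real) \<Rightarrow> nat"
  assumes finite_C: "finite C" and finite_U: "finite U" and disjoint: "C \<inter> U = {}"
    and alpha_pos: "0 < \<alpha>" and alpha_less_1: "\<alpha> < 1"
    and kappa_measurable: "\<kappa> \<in> measurable (Pi\<^sub>M U (\<lambda>_. borel)) (count_space UNIV)"
    and kappa_pos: "\<And>v. v \<in> space (Pi\<^sub>M U (\<lambda>_. borel)) \<Longrightarrow> 1 \<le> \<kappa> v"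
begin

abbreviation "Data \<equiv> Pi\<^sub>M (C \<union> U) (\<lambda>_. D)"

abbreviation scores :: "(nat \<Rightarrow> real \<times> real) \<Rightarrow> nat \<Rightarrow> real"
  where "scores w \<equiv> \<lambda>i. fst (w i)"

abbreviation residuals :: "(nat \<Rightarrow> real \<times> real) \<Rightarrow> nat \<Rightarrow> real"
  where "residuals w \<equiv> \<lambda>i. snd (w i)"

definition kappa_hat :: "(nat \<Rightarrow> real \<times> real) \<Rightarrow> nat"
  where "kappa_hat w = \<kappa> (restrict (scores w) U)"

text \<open>The leave-one-out quantities for a test point \<open>j\<close> do not depend on \<open>w j\<close>: its score is
  replaced by the fixed value \<open>t_u\<close>.\<close>
definition kappa_loo :: "nat \<Rightarrow> (nat \<Rightarrow> real \<times> real) \<Rightarrow> nat"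
  where "kappa_loo j w = \<kappa> (restrict ((scores w)(j := t_u)) U)"

definition tau_loo :: "nat \<Rightarrow> (nat \<Rightarrow> real \<times> real) \<Rightarrow> real"
  where "tau_loo j w = kth_smallest (scores w) (U - {j}) (kappa_loo j w)"

text \<open>Summed over \<open>j \<in> U\<close>, the following terms give the false coverage proportion, the constant
  \<open>1\<close> and the gap.\<close>
definition miss_term :: "nat \<Rightarrow> (nat \<Rightarrow> real \<times> real) \<Rightarrow> real"
  where "miss_term j w =
    (if j \<in> selected_misses \<alpha> (insert j C) (tau_loo j w) w then 1 else 0) / real (kappa_loo j w)"

definition sel_term :: "nat \<Rightarrow> (nat \<Rightarrow> real \<times> real) \<Rightarrow> real"
  where "sel_term j w = (if scores w j \<le> tau_loo j w then 1 else 0) / real (kappa_loo j w)"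

definition gap_term :: "nat \<Rightarrow> (nat \<Rightarrow> real \<times> real) \<Rightarrow> real"
  where "gap_term j w = sel_term j w / ((real (card C) + 1) * F (tau_loo j w))"

lemma prob_space_Data: "prob_space Data"
  using finite_C finite_U by (intro prob_space_PiM_D) simp

lemma measurable_scores_restrict:
  "(\<lambda>w. restrict ((scores w)(j := t)) U) \<in> measurable Data (Pi\<^sub>M U (\<lambda>_. borel))"
proof (rule measurable_restrict)
  fix i
  assume "i \<in> U"
  then show "(\<lambda>w. ((scores w)(j := t)) i) \<in> borel_measurable Data"
    by (cases "i = j") (simp_all add: measurable_PiM_score)
qed

lemma measurable_kappa_loo: "kappa_loo j \<in> measurable Data (count_space UNIV)"
  unfolding kappa_loo_def[abs_def]
  using measurable_scores_restrict kappa_measurable by (rule measurable_compose)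

lemma measurable_kappa_hat: "kappa_hat \<in> measurable Data (count_space UNIV)"
proof -
  have "(\<lambda>w. restrict (scores w) U) \<in> measurable Data (Pi\<^sub>M U (\<lambda>_. borel))"
    by (rule measurable_restrict) (simp add: measurable_PiM_score)
  then show ?thesis
    unfolding kappa_hat_def[abs_def] using kappa_measurable by (rule measurable_compose)
qed

lemma measurable_tau_loo: "tau_loo j \<in> borel_measurable Data"
  unfolding tau_loo_def[abs_def] using finite_U
  by (intro borel_measurable_kth_smallest_index measurable_kappa_loo) (simp_all add: measurable_PiM_score)

lemma
  assumes j: "j \<in> U"
  shows measurable_sel_term: "sel_term j \<in> borel_measurable Data"
    and measurable_gap_term: "gap_term j \<in> borel_measurable Data"
    and measurable_miss_term: "miss_term j \<in> borel_measurable Data"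
proof -
  note [measurable] = measurable_tau_loo borel_measurable_real_of_nat[OF measurable_kappa_loo]
  have score_j[measurable]: "(\<lambda>w. scores w j) \<in> borel_measurable Data"
    and [measurable]: "(\<lambda>w. residuals w j) \<in> borel_measurable Data"
    using j by (simp_all add: measurable_PiM_score measurable_PiM_residual)
  have [measurable]: "Measurable.pred Data (\<lambda>w. scores w j \<le> tau_loo j w)"
    unfolding pred_def using score_j measurable_tau_loo by (rule borel_measurable_le)
  show "sel_term j \<in> borel_measurable Data"
    unfolding sel_term_def[abs_def] by measurable
  then show "gap_term j \<in> borel_measurable Data"
    unfolding gap_term_def[abs_def] by measurable
  have calib: "(\<lambda>w. {i\<in>C. scores w i \<le> tau_loo j w}) \<in> measurable Data (count_space (Pow C))"
    using finite_C
    by (intro measurable_Collect_finite borel_measurable_le measurable_tau_loo)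
      (simp_all add: measurable_PiM_score)
  have "(\<lambda>w. conf_quantile \<alpha> (residuals w) {i\<in>C. scores w i \<le> tau_loo j w}) \<in> borel_measurable Data"
    by (rule borel_measurable_conf_quantile[OF finite_C _ calib]) (simp add: measurable_PiM_residual)
  then have [measurable]: "Measurable.pred Data
      (\<lambda>w. conf_quantile \<alpha> (residuals w) {i\<in>C. scores w i \<le> tau_loo j w} < ereal (residuals w j))"
    unfolding pred_def by (rule borel_measurable_less) measurable
  have "insert j C - {j} = C"
    using j disjoint by auto
  then have eq: "(\<lambda>w. j \<in> selected_misses \<alpha> (insert j C) (tau_loo j w) w) = (\<lambda>w. scores w j \<le> tau_loo j w \<and>
      conf_quantile \<alpha> (residuals w) {i\<in>C. scores w i \<le> tau_loo j w} < ereal (residuals w j))"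
    by (simp add: mem_selected_misses_iff)
  have "Measurable.pred Data (\<lambda>w. j \<in> selected_misses \<alpha> (insert j C) (tau_loo j w) w)"
    unfolding eq by measurable
  then show "miss_term j \<in> borel_measurable Data"
    unfolding miss_term_def[abs_def] by measurable
qed

lemma measurable_false_coverage_proportion:
  "(\<lambda>w. false_coverage_proportion \<alpha> \<kappa> C U (scores w) (residuals w)) \<in> borel_measurable Data"
proof -
  define th where "th r w = kth_smallest (scores w) U (kappa_hat w + r)" for r w
  define Q where "Q w = conf_quantile \<alpha> (residuals w) {i\<in>C. scores w i \<le> th 1 w}" for w
  have th[measurable]: "th r \<in> borel_measurable Data" for r
    unfolding th_def[abs_def] using finite_U measurable_kappa_hat
    by (intro borel_measurable_kth_smallest_index) (auto simp: measurable_PiM_score)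
  have calib: "(\<lambda>w. {i\<in>C. scores w i \<le> th 1 w}) \<in> measurable Data (count_space (Pow C))"
    using finite_C by (intro measurable_Collect_finite borel_measurable_le th) (simp_all add: measurable_PiM_score)
  have Q[measurable]: "Q \<in> borel_measurable Data"
    unfolding Q_def[abs_def]
    by (rule borel_measurable_conf_quantile[OF finite_C _ calib]) (simp add: measurable_PiM_residual)
  have "(\<lambda>w. real (card {j\<in>U. scores w j \<le> th 0 w \<and> Q w < ereal (residuals w j)})) \<in> borel_measurable Data"
    "(\<lambda>w. real (card {j\<in>U. scores w j \<le> th 0 w})) \<in> borel_measurable Data"
  proof -
    have "{w\<in>space Data. scores w j \<le> th 0 w} \<in> sets Data"
      "{w\<in>space Data. scores w j \<le> th 0 w \<and> Q w < ereal (residuals w j)} \<in> sets Data" if "j \<in> U" for j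
    proof -
      have "(\<lambda>w. fst (w j)) \<in> borel_measurable Data" "(\<lambda>w. ereal (snd (w j))) \<in> borel_measurable Data"
        using that by (simp_all add: measurable_PiM_score measurable_PiM_residual)
      then have "{w\<in>space Data. scores w j \<le> th 0 w} \<in> sets Data"
        "{w\<in>space Data. Q w < ereal (residuals w j)} \<in> sets Data"
        by (auto intro: borel_measurable_le borel_measurable_less th Q)
      moreover have "{w\<in>space Data. scores w j \<le> th 0 w \<and> Q w < ereal (residuals w j)} =
          {w\<in>space Data. scores w j \<le> th 0 w} \<inter> {w\<in>space Data. Q w < ereal (residuals w j)}"
        by auto
      ultimately show "{w\<in>space Data. scores w j \<le> th 0 w} \<in> sets Data"
        "{w\<in>space Data. scores w j \<le> th 0 w \<and> Q w < ereal (residuals w j)} \<in> sets Data"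
        by auto
    qed
    then show "(\<lambda>w. real (card {j\<in>U. scores w j \<le> th 0 w \<and> Q w < ereal (residuals w j)})) \<in> borel_measurable Data"
      "(\<lambda>w. real (card {j\<in>U. scores w j \<le> th 0 w})) \<in> borel_measurable Data"
      using finite_U by (auto intro!: borel_measurable_card_Collect)
  qed
  moreover have "false_coverage_proportion \<alpha> \<kappa> C U (scores w) (residuals w) =
      real (card {j\<in>U. scores w j \<le> th 0 w \<and> Q w < ereal (residuals w j)}) /
      max (real (card {j\<in>U. scores w j \<le> th 0 w})) 1" for w
  proof -
    have "{j\<in>sel_test (scores w) U (kappa_hat w). Q w < ereal (residuals w j)} =
        {j\<in>U. scores w j \<le> th 0 w \<and> Q w < ereal (residuals w j)}"
      by (auto simp: sel_test_def th_def)
    then show ?thesis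
      by (simp add: false_coverage_proportion_def Let_def kappa_hat_def[symmetric] sel_test_def
          sel_calib_plus_def Q_def th_def of_nat_max)
  qed
  ultimately show ?thesis
    by simp
qed

lemma measurable_fcr_gap: "(\<lambda>w. fcr_gap F (card C) \<kappa> U (scores w)) \<in> borel_measurable Data"
proof -
  have "(\<lambda>w. kth_smallest (scores w) U (kappa_hat w + 1)) \<in> borel_measurable Data"
    using finite_U measurable_kappa_hat
    by (intro borel_measurable_kth_smallest_index) (auto simp: measurable_PiM_score)
  then show ?thesis
    unfolding fcr_gap_def kappa_hat_def[symmetric] by measurable
qed

lemma kappa_hat_pos: "1 \<le> kappa_hat w"
  unfolding kappa_hat_def by (rule kappa_pos) (simp add: space_PiM)

lemma
  assumes "j \<in> U" "kappa_loo j w = kappa_hat w" "kappa_hat w \<le> card U - 1"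
  shows selected_loo_iff:
      "scores w j \<le> tau_loo j w \<longleftrightarrow> j \<in> sel_test (scores w) U (kappa_hat w)"
    and tau_loo_eq_threshold:
      "scores w j \<le> tau_loo j w \<Longrightarrow> tau_loo j w = kth_smallest (scores w) U (kappa_hat w + 1)"
proof -
  have k: "1 \<le> kappa_hat w" "kappa_hat w \<le> card (U - {j})"
    using kappa_hat_pos assms finite_U by auto
  have tau: "tau_loo j w = kth_smallest (scores w) (U - {j}) (kappa_hat w)"
    using assms(2) by (simp add: tau_loo_def)
  show "scores w j \<le> tau_loo j w \<longleftrightarrow> j \<in> sel_test (scores w) U (kappa_hat w)"
    unfolding tau sel_test_def using le_kth_smallest_remove_iff[OF finite_U assms(1) k, of "scores w"] assms(1)
    by blast
  show "tau_loo j w = kth_smallest (scores w) U (kappa_hat w + 1)" if "scores w j \<le> tau_loo j w"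
    unfolding tau using kth_smallest_Suc_insert[OF finite_U assms(1) k] that tau by simp
qed

lemma
  assumes "j \<in> U" "kappa_loo j w = kappa_hat w" "kappa_hat w \<le> card U - 1"
  defines "Q \<equiv> conf_quantile \<alpha> (residuals w) (sel_calib_plus (scores w) C U (kappa_hat w))"
  shows miss_term_eq: "miss_term j w =
      (if j \<in> sel_test (scores w) U (kappa_hat w) \<and> Q < ereal (residuals w j) then 1 else 0) / real (kappa_hat w)"
    and sel_term_eq: "sel_term j w =
      (if j \<in> sel_test (scores w) U (kappa_hat w) then 1 else 0) / real (kappa_hat w)"
    and gap_term_eq: "gap_term j w = sel_term j w * fcr_gap F (card C) \<kappa> U (scores w)"
proof -
  have C: "insert j C - {j} = C"
    using assms(1) disjoint by auto
  have "j \<in> selected_misses \<alpha> (insert j C) (tau_loo j w) w \<longleftrightarrow>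
      j \<in> sel_test (scores w) U (kappa_hat w) \<and> Q < ereal (residuals w j)"
    using selected_loo_iff[OF assms(1-3)] tau_loo_eq_threshold[OF assms(1-3)]
    by (auto simp: mem_selected_misses_iff C Q_def sel_calib_plus_def)
  then show "miss_term j w =
      (if j \<in> sel_test (scores w) U (kappa_hat w) \<and> Q < ereal (residuals w j) then 1 else 0) / real (kappa_hat w)"
    using assms(2) by (simp add: miss_term_def)
  show "sel_term j w = (if j \<in> sel_test (scores w) U (kappa_hat w) then 1 else 0) / real (kappa_hat w)"
    using assms(2) selected_loo_iff[OF assms(1-3)] by (simp add: sel_term_def)
  show "gap_term j w = sel_term j w * fcr_gap F (card C) \<kappa> U (scores w)"
    using tau_loo_eq_threshold[OF assms(1-3)]
    by (cases "scores w j \<le> tau_loo j w")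
      (simp_all add: gap_term_def sel_term_def fcr_gap_def kappa_hat_def)
qed

text \<open>With distinct scores the selected set has exactly \<open>\<kappa>\<close> elements.\<close>
lemma
  assumes loo: "\<forall>j\<in>U. kappa_loo j w = kappa_hat w" and le: "kappa_hat w \<le> card U - 1"
    and inj: "inj_on (scores w) U"
  shows sum_miss_term: "false_coverage_proportion \<alpha> \<kappa> C U (scores w) (residuals w) = (\<Sum>j\<in>U. miss_term j w)"
    and sum_sel_term: "(\<Sum>j\<in>U. sel_term j w) = 1"
    and sum_gap_term: "fcr_gap F (card C) \<kappa> U (scores w) = (\<Sum>j\<in>U. gap_term j w)"
proof -
  let ?k = "kappa_hat w"
  let ?Su = "sel_test (scores w) U ?k"
  let ?Q = "conf_quantile \<alpha> (residuals w) (sel_calib_plus (scores w) C U ?k)"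
  have count: "(\<Sum>j\<in>U. (if P j then 1 else 0) / real ?k) = real (card {j\<in>U. P j}) / real ?k" for P
    using finite_U by (simp add: sum_divide_distrib[symmetric] sum.If_cases Collect_conj_eq Int_commute)
  have card_Su: "card ?Su = ?k"
    unfolding sel_test_def using card_le_kth_smallest_inj[OF finite_U kappa_hat_pos _ inj] le
    by simp
  have Su: "{j\<in>U. j \<in> ?Su} = ?Su" "{j\<in>U. j \<in> ?Su \<and> ?Q < ereal (residuals w j)} = {j\<in>?Su. ?Q < ereal (residuals w j)}"
    by (auto simp: sel_test_def)
  have sel: "(\<Sum>j\<in>U. sel_term j w) = 1"
    using sel_term_eq loo le count[of "\<lambda>j. j \<in> ?Su"] Su card_Su kappa_hat_pos[of w] by simp
  then show "(\<Sum>j\<in>U. sel_term j w) = 1" .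
  show "false_coverage_proportion \<alpha> \<kappa> C U (scores w) (residuals w) = (\<Sum>j\<in>U. miss_term j w)"
    using miss_term_eq loo le count[of "\<lambda>j. j \<in> ?Su \<and> ?Q < ereal (residuals w j)"] Su card_Su
      kappa_hat_pos[of w]
    by (simp add: false_coverage_proportion_def kappa_hat_def[symmetric] Let_def max_absorb1)
  show "fcr_gap F (card C) \<kappa> U (scores w) = (\<Sum>j\<in>U. gap_term j w)"
    using gap_term_eq loo le sel by (simp add: sum_distrib_right[symmetric])
qed

lemma
  assumes "j \<in> U"
  shows kappa_loo_merge: "kappa_loo j (merge (U - {j}) (insert j C) (x, y)) = kappa_loo j x"
    and tau_loo_merge: "tau_loo j (merge (U - {j}) (insert j C) (x, y)) = tau_loo j x"
    and miss_term_merge: "miss_term j (merge (U - {j}) (insert j C) (x, y)) =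
      (if j \<in> selected_misses \<alpha> (insert j C) (tau_loo j x) y then 1 else 0) / real (kappa_loo j x)"
    and sel_term_merge: "sel_term j (merge (U - {j}) (insert j C) (x, y)) =
      (if fst (y j) \<le> tau_loo j x then 1 else 0) / real (kappa_loo j x)"
proof -
  let ?w = "merge (U - {j}) (insert j C) (x, y)"
  have disj: "(U - {j}) \<inter> insert j C = {}"
    using disjoint by auto
  have "restrict ((scores ?w)(j := t_u)) U = restrict ((scores x)(j := t_u)) U"
    using disj by (intro restrict_ext) simp
  then show kappa: "kappa_loo j ?w = kappa_loo j x"
    by (simp add: kappa_loo_def)
  have "kth_smallest (scores ?w) (U - {j}) r = kth_smallest (scores x) (U - {j}) r" for r
    using disj by (intro kth_smallest_cong) simp
  then show tau: "tau_loo j ?w = tau_loo j x"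
    by (simp add: tau_loo_def kappa)
  have "selected_misses \<alpha> (insert j C) \<tau> ?w = selected_misses \<alpha> (insert j C) \<tau> y" for \<tau>
    using disj by (intro selected_misses_cong) simp
  then show "miss_term j ?w =
      (if j \<in> selected_misses \<alpha> (insert j C) (tau_loo j x) y then 1 else 0) / real (kappa_loo j x)"
    by (simp add: miss_term_def kappa tau)
  show "sel_term j ?w = (if fst (y j) \<le> tau_loo j x then 1 else 0) / real (kappa_loo j x)"
    using disj by (simp add: sel_term_def kappa tau)
qed

lemma gap_term_merge:
  "j \<in> U \<Longrightarrow> gap_term j (merge (U - {j}) (insert j C) (x, y)) =
    sel_term j (merge (U - {j}) (insert j C) (x, y)) / ((real (card C) + 1) * F (tau_loo j x))"
  by (simp add: gap_term_def tau_loo_merge)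

lemma
  assumes "j \<in> U"
  shows integral_miss_term_merge: "(\<integral>y. miss_term j (merge (U - {j}) (insert j C) (x, y)) \<partial>Pi\<^sub>M (insert j C) (\<lambda>_. D)) =
      measure (Pi\<^sub>M (insert j C) (\<lambda>_. D))
        {y\<in>space (Pi\<^sub>M (insert j C) (\<lambda>_. D)). j \<in> selected_misses \<alpha> (insert j C) (tau_loo j x) y}
      / real (kappa_loo j x)"
    and integrable_miss_term_merge:
      "integrable (Pi\<^sub>M (insert j C) (\<lambda>_. D)) (\<lambda>y. miss_term j (merge (U - {j}) (insert j C) (x, y)))"
    and integral_sel_term_merge: "(\<integral>y. sel_term j (merge (U - {j}) (insert j C) (x, y)) \<partial>Pi\<^sub>M (insert j C) (\<lambda>_. D)) =
      F (tau_loo j x) / real (kappa_loo j x)"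
    and integrable_sel_term_merge:
      "integrable (Pi\<^sub>M (insert j C) (\<lambda>_. D)) (\<lambda>y. sel_term j (merge (U - {j}) (insert j C) (x, y)))"
proof -
  interpret J: prob_space "Pi\<^sub>M (insert j C) (\<lambda>_. D)"
    using finite_C by (intro prob_space_PiM_D) simp
  have miss: "{y\<in>space (Pi\<^sub>M (insert j C) (\<lambda>_. D)). j \<in> selected_misses \<alpha> (insert j C) (tau_loo j x) y}
      \<in> sets (Pi\<^sub>M (insert j C) (\<lambda>_. D))"
    using finite_C by (intro sets_selected_misses) simp
  have sel: "{y\<in>space (Pi\<^sub>M (insert j C) (\<lambda>_. D)). fst (y j) \<le> tau_loo j x} \<in> sets (Pi\<^sub>M (insert j C) (\<lambda>_. D))"
    by (intro borel_measurable_le) (simp_all add: measurable_PiM_score)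
  show "(\<integral>y. miss_term j (merge (U - {j}) (insert j C) (x, y)) \<partial>Pi\<^sub>M (insert j C) (\<lambda>_. D)) =
      measure (Pi\<^sub>M (insert j C) (\<lambda>_. D))
        {y\<in>space (Pi\<^sub>M (insert j C) (\<lambda>_. D)). j \<in> selected_misses \<alpha> (insert j C) (tau_loo j x) y}
      / real (kappa_loo j x)"
    "integrable (Pi\<^sub>M (insert j C) (\<lambda>_. D)) (\<lambda>y. miss_term j (merge (U - {j}) (insert j C) (x, y)))"
    unfolding miss_term_merge[OF assms]
    using J.integral_if_const_divide[OF miss, of 1 "real (kappa_loo j x)"] by simp_all
  show "(\<integral>y. sel_term j (merge (U - {j}) (insert j C) (x, y)) \<partial>Pi\<^sub>M (insert j C) (\<lambda>_. D)) =
      F (tau_loo j x) / real (kappa_loo j x)"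
    "integrable (Pi\<^sub>M (insert j C) (\<lambda>_. D)) (\<lambda>y. sel_term j (merge (U - {j}) (insert j C) (x, y)))"
    unfolding sel_term_merge[OF assms]
    using J.integral_if_const_divide[OF sel, of 1 "real (kappa_loo j x)"]
      measure_PiM_score_le[of "insert j C" j] finite_C
    by simp_all
qed

lemma integral_gap_term_merge:
  assumes "j \<in> U"
  shows "(\<integral>y. gap_term j (merge (U - {j}) (insert j C) (x, y)) \<partial>Pi\<^sub>M (insert j C) (\<lambda>_. D)) =
      F (tau_loo j x) / ((real (card C) + 1) * F (tau_loo j x)) / real (kappa_loo j x)"
    and "integrable (Pi\<^sub>M (insert j C) (\<lambda>_. D)) (\<lambda>y. gap_term j (merge (U - {j}) (insert j C) (x, y)))"
  using integral_sel_term_merge[OF assms, of x] integrable_sel_term_merge[OF assms, of x]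
  by (simp_all add: gap_term_merge[OF assms])

text \<open>Conditioning on the test points other than \<open>j\<close> fixes the leave-one-out threshold, so the
  exchangeability of \<open>j\<close> and the calibration points can be used in the inner integral.\<close>
lemma integral_nonneg_merge:
  fixes f :: "(nat \<Rightarrow> real \<times> real) \<Rightarrow> real"
  assumes "j \<in> U" "integrable Data f"
    and "\<And>x. 0 \<le> (\<integral>y. f (merge (U - {j}) (insert j C) (x, y)) \<partial>Pi\<^sub>M (insert j C) (\<lambda>_. D))"
  shows "0 \<le> integral\<^sup>L Data f"
proof -
  have Data: "C \<union> U = (U - {j}) \<union> insert j C"
    using assms(1) by auto
  have "integral\<^sup>L Data f =
      (\<integral>x. (\<integral>y. f (merge (U - {j}) (insert j C) (x, y)) \<partial>Pi\<^sub>M (insert j C) (\<lambda>_. D)) \<partial>Pi\<^sub>M (U - {j}) (\<lambda>_. D))"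
    using assms(2) disjoint finite_C finite_U unfolding Data
    by (intro PD.product_integral_fold) auto
  then show ?thesis
    using assms(3) by (simp add: Bochner_Integration.integral_nonneg)
qed

lemma
  assumes "j \<in> U"
  shows integrable_miss_term: "integrable Data (miss_term j)"
    and integrable_sel_term: "integrable Data (sel_term j)"
proof -
  interpret prob_space Data
    by (rule prob_space_Data)
  show "integrable Data (miss_term j)"
    using measurable_miss_term[OF assms] abs_if_divide_le_1
    by (intro integrable_const_bound[where B = 1]) (simp_all add: miss_term_def)
  show "integrable Data (sel_term j)"
    using measurable_sel_term[OF assms] abs_if_divide_le_1
    by (intro integrable_const_bound[where B = 1]) (simp_all add: sel_term_def)
qed

lemma integrable_gap_term:
  assumes "j \<in> U"
  shows "integrable Data (gap_term j)"
proof (rule integrableI_bounded)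
  show gap[measurable]: "gap_term j \<in> borel_measurable Data"
    using assms by (rule measurable_gap_term)
  have nonneg: "0 \<le> gap_term j w" for w
    by (simp add: gap_term_def sel_term_def F_nonneg)
  have Data: "C \<union> U = (U - {j}) \<union> insert j C"
    using assms by auto
  have "(\<integral>\<^sup>+w. ennreal (norm (gap_term j w)) \<partial>Data) =
      (\<integral>\<^sup>+x. (\<integral>\<^sup>+y. ennreal (gap_term j (merge (U - {j}) (insert j C) (x, y))) \<partial>Pi\<^sub>M (insert j C) (\<lambda>_. D))
        \<partial>Pi\<^sub>M (U - {j}) (\<lambda>_. D))"
    using nonneg disjoint finite_C finite_U gap unfolding Data
    by (subst PD.product_nn_integral_fold) auto
  also have "\<dots> \<le> (\<integral>\<^sup>+x. 1 \<partial>Pi\<^sub>M (U - {j}) (\<lambda>_. D))"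
  proof (rule nn_integral_mono)
    fix x
    have "F (tau_loo j x) / ((real (card C) + 1) * F (tau_loo j x)) \<le> 1"
      by (cases "F (tau_loo j x) = 0") (simp_all add: nonzero_divide_mult_cancel_right)
    then have "F (tau_loo j x) / ((real (card C) + 1) * F (tau_loo j x)) / real (kappa_loo j x) \<le> 1"
      using F_nonneg by (cases "kappa_loo j x") (auto simp: divide_le_eq)
    then show "(\<integral>\<^sup>+y. ennreal (gap_term j (merge (U - {j}) (insert j C) (x, y))) \<partial>Pi\<^sub>M (insert j C) (\<lambda>_. D)) \<le> 1"
      using integral_gap_term_merge[OF assms, of x] nonneg
      by (simp add: nn_integral_eq_integral)
  qed
  also have "\<dots> < \<infinity>"
    using prob_space.emeasure_space_1[OF prob_space_PiM_D, of "U - {j}"] finite_U by simp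
  finally show "(\<integral>\<^sup>+w. ennreal (norm (gap_term j w)) \<partial>Data) < \<infinity>" .
qed

lemma integral_miss_term_le:
  assumes "j \<in> U"
  shows "integral\<^sup>L Data (miss_term j) \<le> \<alpha> * integral\<^sup>L Data (sel_term j)"
proof -
  have "0 \<le> integral\<^sup>L Data (\<lambda>w. \<alpha> * sel_term j w - miss_term j w)"
  proof (rule integral_nonneg_merge[OF assms])
    show "integrable Data (\<lambda>w. \<alpha> * sel_term j w - miss_term j w)"
      using integrable_miss_term[OF assms] integrable_sel_term[OF assms] by simp
    fix x
    have "\<alpha> * F (tau_loo j x) - measure (Pi\<^sub>M (insert j C) (\<lambda>_. D))
        {y\<in>space (Pi\<^sub>M (insert j C) (\<lambda>_. D)). j \<in> selected_misses \<alpha> (insert j C) (tau_loo j x) y} \<ge> 0"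
      using prob_selected_miss_le[of "insert j C" j \<alpha> "tau_loo j x"] finite_C alpha_pos alpha_less_1 by simp
    then show "0 \<le> (\<integral>y. \<alpha> * sel_term j (merge (U - {j}) (insert j C) (x, y))
        - miss_term j (merge (U - {j}) (insert j C) (x, y)) \<partial>Pi\<^sub>M (insert j C) (\<lambda>_. D))"
      using integrable_miss_term_merge[OF assms] integrable_sel_term_merge[OF assms]
      by (simp add: integral_miss_term_merge[OF assms] integral_sel_term_merge[OF assms] diff_divide_distrib[symmetric])
  qed
  then show ?thesis
    using integrable_miss_term[OF assms] integrable_sel_term[OF assms] by simp
qed

lemma integral_sel_term_le:
  assumes "j \<in> U"
  shows "\<alpha> * integral\<^sup>L Data (sel_term j) \<le> integral\<^sup>L Data (miss_term j) + integral\<^sup>L Data (gap_term j)"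
proof -
  have "0 \<le> integral\<^sup>L Data (\<lambda>w. miss_term j w + gap_term j w - \<alpha> * sel_term j w)"
  proof (rule integral_nonneg_merge[OF assms])
    show "integrable Data (\<lambda>w. miss_term j w + gap_term j w - \<alpha> * sel_term j w)"
      using integrable_miss_term[OF assms] integrable_sel_term[OF assms] integrable_gap_term[OF assms]
      by simp
    fix x
    let ?\<tau> = "tau_loo j x"
    let ?\<mu> = "measure (Pi\<^sub>M (insert j C) (\<lambda>_. D))
        {y\<in>space (Pi\<^sub>M (insert j C) (\<lambda>_. D)). j \<in> selected_misses \<alpha> (insert j C) ?\<tau> y}"
    \<comment> \<open>If \<open>F \<tau> = 0\<close> the gap term is \<open>0 / 0 = 0\<close>, but so is \<open>\<alpha> F \<tau>\<close>.\<close>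
    have "0 \<le> ?\<mu> + F ?\<tau> / ((real (card C) + 1) * F ?\<tau>) - \<alpha> * F ?\<tau>"
    proof (cases "F ?\<tau> = 0")
      case False
      have "card (insert j C) = card C + 1"
        using assms disjoint finite_C by (subst card_insert_disjoint) auto
      then have "\<alpha> * F ?\<tau> - 1 / (real (card C) + 1) \<le> ?\<mu>"
        using prob_selected_miss_ge[of "insert j C" j \<alpha> ?\<tau>] finite_C alpha_pos alpha_less_1
        by (simp add: add.commute)
      then show ?thesis
        using False by simp
    qed simp
    then show "0 \<le> (\<integral>y. miss_term j (merge (U - {j}) (insert j C) (x, y))
        + gap_term j (merge (U - {j}) (insert j C) (x, y))
        - \<alpha> * sel_term j (merge (U - {j}) (insert j C) (x, y)) \<partial>Pi\<^sub>M (insert j C) (\<lambda>_. D))"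
      using integrable_miss_term_merge[OF assms] integrable_sel_term_merge[OF assms]
        integral_gap_term_merge[OF assms]
      by (simp add: integral_miss_term_merge[OF assms] integral_sel_term_merge[OF assms]
          add_divide_distrib[symmetric] diff_divide_distrib[symmetric])
  qed
  then show ?thesis
    using integrable_miss_term[OF assms] integrable_sel_term[OF assms] integrable_gap_term[OF assms]
    by simp
qed

theorem fcr_bounds_PiM:
  assumes "AE w in Data. (\<forall>j\<in>U. kappa_loo j w = kappa_hat w) \<and> kappa_hat w \<le> card U - 1"
  defines "FCR \<equiv> \<integral>w. false_coverage_proportion \<alpha> \<kappa> C U (scores w) (residuals w) \<partial>Data"
    and "Gap \<equiv> \<integral>w. fcr_gap F (card C) \<kappa> U (scores w) \<partial>Data"
  shows "\<alpha> - Gap \<le> FCR" and "FCR \<le> \<alpha>"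
proof -
  interpret prob_space Data
    by (rule prob_space_Data)
  have "AE w in Data. inj_on (scores w) U"
    using finite_C finite_U score_no_atoms by (intro AE_PiM_inj_on) auto
  note good = this assms(1)
  have "AE w in Data. false_coverage_proportion \<alpha> \<kappa> C U (scores w) (residuals w) = (\<Sum>j\<in>U. miss_term j w)"
    using good by eventually_elim (rule sum_miss_term; auto)
  with finite_U measurable_false_coverage_proportion integrable_miss_term
  have FCR: "FCR = (\<Sum>j\<in>U. integral\<^sup>L Data (miss_term j))"
    unfolding FCR_def by (rule integral_eq_sum_AE)
  have "AE w in Data. fcr_gap F (card C) \<kappa> U (scores w) = (\<Sum>j\<in>U. gap_term j w)"
    using good by eventually_elim (rule sum_gap_term; auto)
  with finite_U measurable_fcr_gap integrable_gap_term
  have Gap: "Gap = (\<Sum>j\<in>U. integral\<^sup>L Data (gap_term j))"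
    unfolding Gap_def by (rule integral_eq_sum_AE)
  have "AE w in Data. 1 = (\<Sum>j\<in>U. sel_term j w)"
    using good by eventually_elim (rule sum_sel_term[symmetric]; auto)
  with finite_U _ integrable_sel_term
  have "integral\<^sup>L Data (\<lambda>_. 1) = (\<Sum>j\<in>U. integral\<^sup>L Data (sel_term j))"
    by (rule integral_eq_sum_AE) simp
  then have sel: "(\<Sum>j\<in>U. \<alpha> * integral\<^sup>L Data (sel_term j)) = \<alpha>"
    by (simp add: prob_space sum_distrib_left[symmetric])
  have "FCR \<le> (\<Sum>j\<in>U. \<alpha> * integral\<^sup>L Data (sel_term j))"
    unfolding FCR using integral_miss_term_le by (rule sum_mono)
  then show "FCR \<le> \<alpha>"
    unfolding sel .
  have "(\<Sum>j\<in>U. \<alpha> * integral\<^sup>L Data (sel_term j))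
      \<le> (\<Sum>j\<in>U. integral\<^sup>L Data (miss_term j) + integral\<^sup>L Data (gap_term j))"
    using integral_sel_term_le by (rule sum_mono)
  then show "\<alpha> - Gap \<le> FCR"
    unfolding FCR Gap sel by (simp add: sum.distrib)
qed

lemma fcr_bounds_distr:
  assumes "prob_space M" "Wv \<in> measurable M Data" "distr M Data Wv = Data"
    and "AE \<omega> in M. (\<forall>j\<in>U. kappa_loo j (Wv \<omega>) = kappa_hat (Wv \<omega>)) \<and> kappa_hat (Wv \<omega>) \<le> card U - 1"
  defines "FCR \<equiv> \<integral>\<omega>. false_coverage_proportion \<alpha> \<kappa> C U (scores (Wv \<omega>)) (residuals (Wv \<omega>)) \<partial>M"
    and "Gap \<equiv> \<integral>\<omega>. fcr_gap F (card C) \<kappa> U (scores (Wv \<omega>)) \<partial>M"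
  shows "\<alpha> - Gap \<le> FCR" and "FCR \<le> \<alpha>"
proof -
  have "Measurable.pred Data (\<lambda>w. (\<forall>j\<in>U. kappa_loo j w = kappa_hat w) \<and> kappa_hat w \<le> card U - 1)"
    using finite_U measurable_kappa_loo measurable_kappa_hat by measurable
  then have "AE w in distr M Data Wv. (\<forall>j\<in>U. kappa_loo j w = kappa_hat w) \<and> kappa_hat w \<le> card U - 1"
    using assms(4) by (subst AE_distr_iff[OF assms(2)]) auto
  then have "AE w in Data. (\<forall>j\<in>U. kappa_loo j w = kappa_hat w) \<and> kappa_hat w \<le> card U - 1"
    by (simp only: assms(3))
  moreover have "FCR = (\<integral>w. false_coverage_proportion \<alpha> \<kappa> C U (scores w) (residuals w) \<partial>Data)"
    "Gap = (\<integral>w. fcr_gap F (card C) \<kappa> U (scores w) \<partial>Data)"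
    unfolding FCR_def Gap_def
    using integral_distr[OF assms(2) measurable_false_coverage_proportion]
      integral_distr[OF assms(2) measurable_fcr_gap] assms(3) by simp_all
  ultimately show "\<alpha> - Gap \<le> FCR" "FCR \<le> \<alpha>"
    using fcr_bounds_PiM by simp_all
qed

end

section \<open>Transfer to the original probability space\<close>

theorem fcr_bounds:
  fixes M :: "'a measure" and W :: "nat \<Rightarrow> 'a \<Rightarrow> real \<times> real"
  assumes M: "prob_space M"
    and finite_C: "finite C" and finite_U: "finite U" and disjoint: "C \<inter> U = {}" and "U \<noteq> {}"
    and alpha: "0 < \<alpha>" "\<alpha> < 1"
    and W_measurable: "\<And>i. i \<in> C \<union> U \<Longrightarrow> W i \<in> borel_measurable M"
    and indep: "prob_space.indep_vars M (\<lambda>_. borel) W (C \<union> U)"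
    and ident: "\<And>i j. i \<in> C \<union> U \<Longrightarrow> j \<in> C \<union> U \<Longrightarrow> distr M borel (W i) = distr M borel (W j)"
    and score_no_atoms: "\<And>i t. i \<in> C \<union> U \<Longrightarrow> measure M {\<omega>\<in>space M. fst (W i \<omega>) = t} = 0"
    and residual_no_atoms: "\<And>i r. i \<in> C \<union> U \<Longrightarrow> measure M {\<omega>\<in>space M. snd (W i \<omega>) = r} = 0"
    and F_cdf: "\<And>i t. i \<in> C \<union> U \<Longrightarrow> F t = measure M {\<omega>\<in>space M. fst (W i \<omega>) \<le> t}"
    and kappa_measurable: "\<kappa> \<in> measurable (Pi\<^sub>M U (\<lambda>_. borel)) (count_space UNIV)"
    and kappa_pos: "\<And>v. v \<in> space (Pi\<^sub>M U (\<lambda>_. borel)) \<Longrightarrow> 1 \<le> \<kappa> v"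
    and kappa_loo: "AE \<omega> in M. \<forall>j\<in>U.
      \<kappa> (restrict ((\<lambda>i. fst (W i \<omega>))(j := t_u)) U) = \<kappa> (restrict (\<lambda>i. fst (W i \<omega>)) U)"
    and kappa_le: "AE \<omega> in M. \<kappa> (restrict (\<lambda>i. fst (W i \<omega>)) U) \<le> card U - 1"
  defines "FCR \<equiv> \<integral>\<omega>. false_coverage_proportion \<alpha> \<kappa> C U (\<lambda>i. fst (W i \<omega>)) (\<lambda>i. snd (W i \<omega>)) \<partial>M"
    and "Gap \<equiv> \<integral>\<omega>. fcr_gap F (card C) \<kappa> U (\<lambda>i. fst (W i \<omega>)) \<partial>M"
  shows "\<alpha> - Gap \<le> FCR \<and> FCR \<le> \<alpha>"
proof -
  interpret M: prob_space M
    by (rule M)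
  obtain i0 where i0: "i0 \<in> C \<union> U"
    using \<open>U \<noteq> {}\<close> by auto
  define D where "D = distr M borel (W i0)"
  have sets_D: "sets D = sets borel"
    by (simp add: D_def)
  have "score_residual_law D F"
    unfolding D_def using M W_measurable[OF i0] score_no_atoms[OF i0] residual_no_atoms[OF i0] F_cdf[OF i0]
    by (rule score_residual_law_distr)
  then interpret selective_conformal D F C U \<alpha> t_u \<kappa>
    using assms by (intro selective_conformal.intro selective_conformal_axioms.intro) auto
  define Wv where "Wv \<omega> = (\<lambda>i\<in>C \<union> U. W i \<omega>)" for \<omega>
  have Wv_measurable: "Wv \<in> measurable M Data"
    unfolding Wv_def using W_measurable sets_D
    by (intro measurable_restrict) (simp add: measurable_D_iff[symmetric])
  have "distr M Data Wv = distr M (Pi\<^sub>M (C \<union> U) (\<lambda>_. borel)) Wv"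
    using sets_D by (intro distr_cong sets_PiM_cong) auto
  also have "\<dots> = Data"
    unfolding Wv_def using \<open>U \<noteq> {}\<close> W_measurable indep ident[OF _ i0]
    by (intro M.distr_restrict_iid) (auto simp: D_def)
  finally have distr_Wv: "distr M Data Wv = Data" .
  have "restrict ((scores (Wv \<omega>))(j := t_u)) U = restrict ((\<lambda>i. fst (W i \<omega>))(j := t_u)) U"
    "restrict (scores (Wv \<omega>)) U = restrict (\<lambda>i. fst (W i \<omega>)) U" for \<omega> j
    by (auto intro: restrict_ext simp: Wv_def)
  then have "AE \<omega> in M. (\<forall>j\<in>U. kappa_loo j (Wv \<omega>) = kappa_hat (Wv \<omega>)) \<and> kappa_hat (Wv \<omega>) \<le> card U - 1"
    using kappa_loo kappa_le by (auto simp: kappa_loo_def kappa_hat_def)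
  note bounds = fcr_bounds_distr[OF M Wv_measurable distr_Wv this]
  have "FCR = (\<integral>\<omega>. false_coverage_proportion \<alpha> \<kappa> C U (scores (Wv \<omega>)) (residuals (Wv \<omega>)) \<partial>M)"
    unfolding FCR_def
    by (intro Bochner_Integration.integral_cong refl false_coverage_proportion_cong) (simp_all add: Wv_def)
  moreover have "Gap = (\<integral>\<omega>. fcr_gap F (card C) \<kappa> U (scores (Wv \<omega>)) \<partial>M)"
    unfolding Gap_def by (intro Bochner_Integration.integral_cong refl fcr_gap_cong) (simp add: Wv_def)
  ultimately show ?thesis
    using bounds by simp
qed

lemma notin_pred_int_iff: "y \<notin> pred_int m Q \<longleftrightarrow> Q < ereal \<bar>y - m\<bar>"
  by (cases Q) (auto simp: pred_int_def abs_if)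

theorem theorem2:
  fixes M :: "'a measure"
    and X :: "nat \<Rightarrow> 'a \<Rightarrow> 'd::euclidean_space"
    and Y :: "nat \<Rightarrow> 'a \<Rightarrow> real"
    and mu g :: "'d \<Rightarrow> real"
    and C U :: "nat set"
    and n m :: nat
    and \<alpha> t_u :: real
    and \<kappa> :: "(nat \<Rightarrow> real) \<Rightarrow> nat"
    and F :: "real \<Rightarrow> real"
  assumes M: "prob_space M"
    and mu_meas: "mu \<in> borel_measurable borel"
    and g_meas: "g \<in> borel_measurable borel"
    and finC: "finite C" and finU: "finite U"
    and disj: "C \<inter> U = {}"
    and cardC: "card C = n" and cardU: "card U = m" and m2: "m \<ge> 2"
    and alpha: "0 < \<alpha>" "\<alpha> < 1"
    and rv: "\<And>i. i \<in> C \<union> U \<Longrightarrow> (\<lambda>\<omega>. (X i \<omega>, Y i \<omega>)) \<in> borel_measurable M"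
    and indep: "prob_space.indep_vars M (\<lambda>_. borel) (\<lambda>i \<omega>. (X i \<omega>, Y i \<omega>)) (C \<union> U)"
    and ident: "\<And>i j. i \<in> C \<union> U \<Longrightarrow> j \<in> C \<union> U \<Longrightarrow>
                  distr M borel (\<lambda>\<omega>. (X i \<omega>, Y i \<omega>)) = distr M borel (\<lambda>\<omega>. (X j \<omega>, Y j \<omega>))"
    and T_cont: "\<And>i t. i \<in> C \<union> U \<Longrightarrow> measure M {\<omega> \<in> space M. g (X i \<omega>) = t} = 0"
    and R_cont: "\<And>i r. i \<in> C \<union> U \<Longrightarrow> measure M {\<omega> \<in> space M. \<bar>Y i \<omega> - mu (X i \<omega>)\<bar> = r} = 0"
    and F_cdf: "\<And>i t. i \<in> C \<union> U \<Longrightarrow> F t = measure M {\<omega> \<in> space M. g (X i \<omega>) \<le> t}"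
    and kappa_meas: "\<kappa> \<in> measurable (Pi\<^sub>M U (\<lambda>_. borel)) (count_space UNIV)"
    and kappa_range: "\<And>v. v \<in> space (Pi\<^sub>M U (\<lambda>_. borel)) \<Longrightarrow> \<kappa> v \<in> {1..m}"
    and kappa_inv: "AE \<omega> in M. \<forall>j \<in> U.
          \<kappa> (restrict ((\<lambda>i. g (X i \<omega>))(j := t_u)) U) = \<kappa> (restrict (\<lambda>i. g (X i \<omega>)) U)"
    and kappa_le: "AE \<omega> in M. \<kappa> (restrict (\<lambda>i. g (X i \<omega>)) U) \<le> m - 1"
  shows
   "\<alpha> - (\<integral>\<omega>. 1 / ((real n + 1) *
            F (kth_smallest (\<lambda>i. g (X i \<omega>)) U (\<kappa> (restrict (\<lambda>i. g (X i \<omega>)) U) + 1))) \<partial>M)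
      \<le> (\<integral>\<omega>. (let T = (\<lambda>i. g (X i \<omega>));
                   k = \<kappa> (restrict T U);
                   Su = sel_test T U k;
                   Q = conf_quantile \<alpha> (\<lambda>i. \<bar>Y i \<omega> - mu (X i \<omega>)\<bar>) (sel_calib_plus T C U k)
               in real (card {j \<in> Su. Y j \<omega> \<notin> pred_int (mu (X j \<omega>)) Q}) / real (max (card Su) 1)) \<partial>M)
    \<and> (\<integral>\<omega>. (let T = (\<lambda>i. g (X i \<omega>));
                   k = \<kappa> (restrict T U);
                   Su = sel_test T U k;
                   Q = conf_quantile \<alpha> (\<lambda>i. \<bar>Y i \<omega> - mu (X i \<omega>)\<bar>) (sel_calib_plus T C U k)
               in real (card {j \<in> Su. Y j \<omega> \<notin> pred_int (mu (X j \<omega>)) Q}) / real (max (card Su) 1)) \<partial>M)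
      \<le> \<alpha>"
proof -
  interpret prob_space M
    by (rule M)
  have [measurable]: "(fst :: 'd \<times> real \<Rightarrow> 'd) \<in> borel_measurable borel"
      "(snd :: 'd \<times> real \<Rightarrow> real) \<in> borel_measurable borel"
    by (intro borel_measurable_continuous_onI continuous_intros)+
  note [measurable] = g_meas mu_meas
  have "(\<lambda>p. (g (fst p), \<bar>snd p - mu (fst p)\<bar>)) \<in> borel_measurable borel"
    by (intro borel_measurable_Pair) measurable
  note iid = iid_compose[OF rv indep ident this]
  have "U \<noteq> {}"
    using cardU m2 by auto
  have "\<alpha> - (\<integral>\<omega>. fcr_gap F (card C) \<kappa> U (\<lambda>i. g (X i \<omega>)) \<partial>M)
      \<le> (\<integral>\<omega>. false_coverage_proportion \<alpha> \<kappa> C U (\<lambda>i. g (X i \<omega>)) (\<lambda>i. \<bar>Y i \<omega> - mu (X i \<omega>)\<bar>) \<partial>M) \<and>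
    (\<integral>\<omega>. false_coverage_proportion \<alpha> \<kappa> C U (\<lambda>i. g (X i \<omega>)) (\<lambda>i. \<bar>Y i \<omega> - mu (X i \<omega>)\<bar>) \<partial>M) \<le> \<alpha>"
    using fcr_bounds[OF M finC finU disj \<open>U \<noteq> {}\<close> alpha iid _ _ _ kappa_meas, where F = F and t_u = t_u]
      T_cont R_cont F_cdf kappa_range kappa_inv kappa_le cardU
    by auto
  then show ?thesis
    by (simp add: fcr_gap_def false_coverage_proportion_def notin_pred_int_iff cardC Let_def)
qed

end
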